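(* Fix integers $r\ge 3$ and $k\ge 2$. Let $T_1\ge 2$ be an integer and let $H_1$ be an $r$-graph with vertex set $A^*_{r-1}\cup\{v^r_1\}$ which is $(e_i)_{i=0}^{T_1}$-sequential for a sequence of $r$-sets $(e_i)_{i=0}^{T_1}$ with $v_1^r\in e_i$ for all $i\in[0,T_1]$. Write $e_i^-=e_i\setminus\{v_1^r\}$. For each $j\in[2,2k-1]$, let $H_{2j-1}$ be the $r$-graph obtained from $H_1\setminus\{e_0\}$ by replacing the vertex $v_1^r$ by $v^r_{2j-1}$. For each $j\in[1,k-1]$, let \[H_{4j-2}=\{e\subseteq \{v_{4j-3}^r, v^r_{4j-2}, v^r_{4j-1}\}\cup e_{T_1}^- : |e|=r,\ \{v_{4j-3}^r, v^r_{4j-1}\}\not\subseteq e,\ e_{T_1}^-\not\subseteq e\},\] \[H_{4j}=\{e\subseteq \{v_{4j-1}^r, v^r_{4j}, v^r_{4j+1}\}\cup e_0^- : |e|=r,\ \{v_{4j-1}^r, v^r_{4j+1}\}\not\subseteq e,\ e_0^-\not\subseteq e\}.\] Let $H=\bigcup_{j=1}^{4k-3}H_j$, an $r$-graph with vertex set $A_r^*$. Then, for $T=(2k-1)T_1+4(k-1)$, there exists a sequence of $r$-sets $(e_i)_{i=0}^T$ extending $(e_i)_{i=0}^{T_1}$ such that $H$ is $(e_i)_{i=0}^T$-sequential.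
   Context: Fix a positive integer $k$. For every integer $i\ge1$ let $A_i=\{v_1^i,v_2^i,\dots,v_{4k-3}^i\}$ (these sets being pairwise disjoint) and $A_i^*=\bigcup_{j=1}^iA_j$. An $r$-graph is an $r$-uniform hypergraph identified with its edge set; $F_r=K^r_{r+1}$ is the complete $r$-graph on $r+1$ vertices. For an $r$-graph $G_0$ on a vertex set $V$, the $F_r$-bootstrap process in the complete $r$-graph on $V$ is: $G_i=G_{i-1}\cup\{e : e \text{ an } r\text{-subset of } V,\ \exists\, w\in V\setminus e \text{ such that } e\notin G_{i-1} \text{ and every other } r\text{-subset of } e\cup\{w\} \text{ lies in } G_{i-1}\}$ for $i\ge1$; the $r$-sets in $G_i\setminus G_{i-1}$ are those infected at step $i$, and $G_0$ is stationary if $G_1=G_0$. Definition (sequential): Let $r\ge 3$, let $H$ be an $r$-graph with vertex set $V(H)\subseteq A_r^*$, and let $(e_i)_{i=0}^T$ be a sequence of $r$-subsets of $V(H)$ with $e_0\in H$. Then $H$ is $(e_i)_{i=0}^T$-sequential if, for the $F_r$-bootstrap process in the complete $r$-graph on $V(H)$: (i) starting from $H$, the process runs for $T$ steps (becomes stationary after step $T$), infecting only the $r$-set $e_i$ at step $i$ for each $i\in[1,T]$; (ii) $H\setminus\{e_0\}$ is stationary; (iii) starting from $(H\cup\{e_T\})\setminus\{e_0\}$, the process infects only the $r$-set $e_{T-i}$ at step $i$ for each $i\in[1,T]$. *)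

theory Defs
  imports Main
begin

text \<open>Vertices v^i_j are encoded as pairs (i, j). The parameter k fixes |A_i| = 4k-3.\<close>

type_synonym vert = "nat \<times> nat"

definition vtx :: "nat \<Rightarrow> nat \<Rightarrow> vert" where
  "vtx i j = (i, j)"

definition Aset :: "nat \<Rightarrow> nat \<Rightarrow> vert set" where
  "Aset k i = {vtx i j | j. 1 \<le> j \<and> j \<le> 4 * k - 3}"

definition Astar :: "nat \<Rightarrow> nat \<Rightarrow> vert set" where
  "Astar k i = (\<Union>j\<in>{1..i}. Aset k j)"

definition is_rgraph :: "nat \<Rightarrow> 'a set \<Rightarrow> 'a set set \<Rightarrow> bool" where
  "is_rgraph r V G \<longleftrightarrow> (\<forall>e\<in>G. e \<subseteq> V \<and> card e = r)"

text \<open>One step of the F_r-bootstrap process in the complete r-graph on V.\<close>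
definition boot_step :: "nat \<Rightarrow> 'a set \<Rightarrow> 'a set set \<Rightarrow> 'a set set" where
  "boot_step r V G = G \<union> {e. e \<subseteq> V \<and> card e = r \<and> e \<notin> G \<and>
      (\<exists>w\<in>V - e. \<forall>f. f \<subseteq> insert w e \<and> card f = r \<and> f \<noteq> e \<longrightarrow> f \<in> G)}"

definition boot :: "nat \<Rightarrow> 'a set \<Rightarrow> 'a set set \<Rightarrow> nat \<Rightarrow> 'a set set" where
  "boot r V G0 i = (boot_step r V ^^ i) G0"

definition stationary :: "nat \<Rightarrow> 'a set \<Rightarrow> 'a set set \<Rightarrow> bool" where
  "stationary r V G \<longleftrightarrow> boot_step r V G = G"

definition sequential ::
  "nat \<Rightarrow> nat \<Rightarrow> vert set \<Rightarrow> vert set set \<Rightarrow> (nat \<Rightarrow> vert set) \<Rightarrow> nat \<Rightarrow> bool" where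
  "sequential k r V H es T \<longleftrightarrow>
     3 \<le> r \<and> V \<subseteq> Astar k r \<and> is_rgraph r V H \<and>
     (\<forall>i\<le>T. es i \<subseteq> V \<and> card (es i) = r) \<and> es 0 \<in> H \<and>
     (\<forall>i\<in>{1..T}. boot r V H i - boot r V H (i - 1) = {es i}) \<and>
     boot r V H (Suc T) = boot r V H T \<and>
     stationary r V (H - {es 0}) \<and>
     (\<forall>i\<in>{1..T}. boot r V ((H \<union> {es T}) - {es 0}) i
                  - boot r V ((H \<union> {es T}) - {es 0}) (i - 1) = {es (T - i)})"

definition replace_vertex :: "'a \<Rightarrow> 'a \<Rightarrow> 'a set set \<Rightarrow> 'a set set" where
  "replace_vertex x y G = (\<lambda>e. (\<lambda>u. if u = x then y else u) ` e) ` G"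

definition gadget :: "nat \<Rightarrow> 'a \<Rightarrow> 'a \<Rightarrow> 'a \<Rightarrow> 'a set \<Rightarrow> 'a set set" where
  "gadget r a b c D = {e. e \<subseteq> {a, b, c} \<union> D \<and> card e = r \<and>
                          \<not> {a, c} \<subseteq> e \<and> \<not> D \<subseteq> e}"

end

theory Submission
  imports Defs
begin

text \<open>The graph \<open>H\<close> consists of \<open>2k - 1\<close> copies of the seed \<open>H\<^sub>1\<close>, on the vertices
  \<open>v\<^sup>r\<^sub>1, v\<^sup>r\<^sub>3, \<dots>, v\<^sup>r\<^sub>4\<^sub>k\<^sub>-\<^sub>3\<close>, with consecutive copies joined by a gadget. An \<open>r\<close>-set that becomes
  infectable is either the image of one that is infectable inside a single copy, or it moves the
  infection one step along a gadget: from the edge where the run of one copy ends, over the middle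
  edge of the gadget, to the edge where the run of the next copy starts. As the copies replay the
  run of the seed alternately forwards and backwards, the process runs through copy 0, the two
  remaining edges of gadget 0, copy 1, and so on, one edge per step, for
  \<open>(2k - 1) T\<^sub>1 + 4 (k - 1)\<close> steps. Without \<open>e\<^sub>0\<close> every copy is stationary and no gadget can
  start. Finally the reflection \<open>v\<^sup>r\<^sub>x \<mapsto> v\<^sup>r\<^sub>4\<^sub>k\<^sub>-\<^sub>2\<^sub>-\<^sub>x\<close> carries the forward process of the
  reversed seed onto the reversed process of \<open>H\<close>.\<close>

section \<open>Bootstrap percolation\<close>

definition completes :: "nat \<Rightarrow> 'a set \<Rightarrow> 'a set set \<Rightarrow> 'a \<Rightarrow> 'a set \<Rightarrow> bool" where
  "completes r V G w e \<longleftrightarrow> e \<subseteq> V \<and> card e = r \<and> w \<in> V - e \<and>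
     (\<forall>f. f \<subseteq> insert w e \<and> card f = r \<and> f \<noteq> e \<longrightarrow> f \<in> G)"

lemma boot_step_eq: "boot_step r V G = G \<union> {e. e \<notin> G \<and> (\<exists>w. completes r V G w e)}"
  unfolding boot_step_def completes_def by auto

lemma subset_boot_step: "G \<subseteq> boot_step r V G"
  by (simp add: boot_step_eq)

lemma new_in_boot_step_iff: "e \<in> boot_step r V G - G \<longleftrightarrow> e \<notin> G \<and> (\<exists>w. completes r V G w e)"
  by (auto simp: boot_step_eq)

lemma boot_step_edges_subset:
  assumes "\<forall>e\<in>G. e \<subseteq> V" and "e \<in> boot_step r V G"
  shows "e \<subseteq> V"
  using assms by (auto simp: boot_step_eq completes_def)

lemma boot_0 [simp]: "boot r V G 0 = G"
  by (simp add: boot_def)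

lemma boot_Suc: "boot r V G (Suc i) = boot_step r V (boot r V G i)"
  by (simp add: boot_def)

lemma subset_boot: "G \<subseteq> boot r V G i"
proof (induction i)
  case (Suc i)
  then show ?case unfolding boot_Suc using subset_boot_step by (rule order_trans)
qed simp

lemma boot_one_by_one:
  assumes new: "\<And>t. t < T \<Longrightarrow> boot_step r V (G t) - G t = {E (Suc t)}"
    and next_state: "\<And>t. t < T \<Longrightarrow> G (Suc t) = insert (E (Suc t)) (G t)"
  shows "t \<le> T \<Longrightarrow> boot r V (G 0) t = G t"
proof (induction t)
  case (Suc t)
  then have "boot r V (G 0) (Suc t) = boot_step r V (G t)" by (simp add: boot_Suc)
  also have "\<dots> = G t \<union> (boot_step r V (G t) - G t)"
    using subset_boot_step by blast
  also have "\<dots> = G (Suc t)"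
    using new[of t] next_state[of t] Suc.prems by simp
  finally show ?case .
qed simp

lemma boot_chain:
  assumes "\<forall>i\<in>{1..T}. boot r V G i - boot r V G (i - 1) = {c i}" and "s \<le> T"
  shows "boot r V G s = G \<union> c ` {1..s}"
  using assms(2)
proof (induction s)
  case (Suc s)
  have "Suc s \<in> {1..T}" using Suc.prems by simp
  then have "boot r V G (Suc s) - boot r V G (Suc s - 1) = {c (Suc s)}" using assms(1) by blast
  then have "boot r V G (Suc s) - boot r V G s = {c (Suc s)}" by simp
  moreover have "boot r V G s \<subseteq> boot r V G (Suc s)"
    unfolding boot_Suc by (rule subset_boot_step)
  ultimately have "boot r V G (Suc s) = insert (c (Suc s)) (boot r V G s)" by blast
  then show ?case using Suc by (auto simp: atLeastAtMostSuc_conv)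
qed simp

lemma completes_image:
  assumes f: "bij_betw f V V" and G: "\<forall>g\<in>G. g \<subseteq> V" and c: "completes r V G w e"
  shows "completes r V ((`) f ` G) (f w) (f ` e)"
proof -
  have inj: "inj_on f V" and sur: "f ` V = V" using f by (auto simp: bij_betw_def)
  have e: "e \<subseteq> V" "card e = r" "w \<in> V - e"
    and old: "\<And>g. g \<subseteq> insert w e \<Longrightarrow> card g = r \<Longrightarrow> g \<noteq> e \<Longrightarrow> g \<in> G"
    using c by (auto simp: completes_def)
  have we: "insert w e \<subseteq> V" using e by blast
  show ?thesis
    unfolding completes_def
  proof (intro conjI allI impI)
    show "f ` e \<subseteq> V" using e sur by blast
    show "f w \<in> V - f ` e" using e sur inj_on_image_mem_iff[OF inj] by blast
    show "card (f ` e) = r" using e card_image[OF inj_on_subset[OF inj]] by simp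
    fix g' assume g': "g' \<subseteq> insert (f w) (f ` e) \<and> card g' = r \<and> g' \<noteq> f ` e"
    then obtain g where g: "g \<subseteq> insert w e" "g' = f ` g"
      by (metis image_insert subset_imageE)
    have "card g = r" using g g' card_image[OF inj_on_subset[OF inj]] we by (metis order_trans)
    then have "g \<in> G" using old g g' by blast
    then show "g' \<in> (`) f ` G" using g by blast
  qed
qed

lemma image_edges_inject:
  assumes "inj_on f V" "e \<subseteq> V" "g \<subseteq> V" "f ` e = f ` g"
  shows "e = g"
  using inj_on_image_eq_iff[OF assms(1-3)] assms(4) by blast

lemma boot_step_image_subset:
  assumes f: "bij_betw f V V" and G: "\<forall>g\<in>G. g \<subseteq> V"
  shows "(`) f ` boot_step r V G \<subseteq> boot_step r V ((`) f ` G)"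
proof
  fix x assume "x \<in> (`) f ` boot_step r V G"
  then obtain e where x: "x = f ` e" and e: "e \<in> boot_step r V G" by blast
  show "x \<in> boot_step r V ((`) f ` G)"
  proof (cases "e \<in> G")
    case False
    then obtain w where c: "completes r V G w e" using e new_in_boot_step_iff[of e r V G] by blast
    have "x \<notin> (`) f ` G"
    proof
      assume "x \<in> (`) f ` G"
      then obtain g where "g \<in> G" "f ` e = f ` g" unfolding x by blast
      moreover have "e \<subseteq> V" using c by (simp add: completes_def)
      ultimately have "e \<in> G"
        using G image_edges_inject[OF bij_betw_imp_inj_on[OF f]] by metis
      then show False using False by contradiction
    qed
    then show ?thesis using completes_image[OF f G c] unfolding x boot_step_eq by blast
  next
    case True
    then show ?thesis using x subset_boot_step[of "(`) f ` G"] by blast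
  qed
qed

lemma boot_step_image:
  assumes f: "bij_betw f V V" and G: "\<forall>g\<in>G. g \<subseteq> V"
  shows "boot_step r V ((`) f ` G) = (`) f ` boot_step r V G"
proof
  show "(`) f ` boot_step r V G \<subseteq> boot_step r V ((`) f ` G)"
    by (rule boot_step_image_subset[OF f G])
next
  define h where "h = inv_into V f"
  have h: "bij_betw h V V" unfolding h_def by (rule bij_betw_inv_into[OF f])
  have hf: "h ` f ` e = e" if "e \<subseteq> V" for e
    using that bij_betw_inv_into_left[OF f] unfolding h_def by (simp add: image_image subset_iff)
  have fh: "f ` h ` e = e" if "e \<subseteq> V" for e
    using that bij_betw_inv_into_right[OF f] unfolding h_def by (simp add: image_image subset_iff)
  have fG: "\<forall>g\<in>(`) f ` G. g \<subseteq> V" using G f by (auto simp: bij_betw_def)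
  have "(`) h ` (`) f ` G = G" using G hf by (simp add: image_image)
  then have "(`) h ` boot_step r V ((`) f ` G) \<subseteq> boot_step r V G"
    using boot_step_image_subset[OF h fG] by simp
  then have "(`) f ` (`) h ` boot_step r V ((`) f ` G) \<subseteq> (`) f ` boot_step r V G"
    by (rule image_mono)
  moreover have "(`) f ` (`) h ` boot_step r V ((`) f ` G) = boot_step r V ((`) f ` G)"
    using fh boot_step_edges_subset[OF fG] by (simp add: image_image)
  ultimately show "boot_step r V ((`) f ` G) \<subseteq> (`) f ` boot_step r V G" by simp
qed

lemma boot_image:
  assumes f: "bij_betw f V V" and G: "\<forall>g\<in>G. g \<subseteq> V"
  shows "boot r V ((`) f ` G) i = (`) f ` boot r V G i" and "\<forall>g\<in>boot r V G i. g \<subseteq> V"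
proof (induction i)
  case (Suc i)
  { case 1 show ?case using Suc boot_step_image[OF f] by (simp add: boot_Suc) }
  { case 2 show ?case using Suc boot_step_edges_subset by (metis boot_Suc) }
qed (use G in simp_all)

lemma image_edges_diff:
  assumes "inj_on f V" "\<forall>e\<in>A. e \<subseteq> V" "\<forall>e\<in>G. e \<subseteq> V"
  shows "(`) f ` A - (`) f ` G = (`) f ` (A - G)"
proof -
  have "inj_on ((`) f) (A \<union> G)"
    using assms image_edges_inject[OF assms(1)] unfolding inj_on_def by (metis Un_iff)
  then show ?thesis by (rule inj_on_image_set_diff[symmetric]) auto
qed

definition sequential_run :: "nat \<Rightarrow> 'a set \<Rightarrow> 'a set set \<Rightarrow> nat \<Rightarrow> (nat \<Rightarrow> 'a set) \<Rightarrow> bool" where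
  "sequential_run r V B T c \<longleftrightarrow> c 0 \<notin> B \<and>
     (\<forall>s<T. boot_step r V (B \<union> c ` {0..s}) - (B \<union> c ` {0..s}) = {c (Suc s)}) \<and>
     stationary r V (B \<union> c ` {0..T})"

lemma sequential_run_cong:
  assumes "\<And>i. i \<le> T \<Longrightarrow> c i = d i" and "sequential_run r V B T c"
  shows "sequential_run r V B T d"
proof -
  have img: "c ` {0..s} = d ` {0..s}" if "s \<le> T" for s
    using assms(1) that by (intro image_cong) auto
  show ?thesis
    using assms(2) unfolding sequential_run_def
  proof (intro conjI allI impI; elim conjE)
    fix s assume "s < T" "\<forall>s<T. boot_step r V (B \<union> c ` {0..s}) - (B \<union> c ` {0..s}) = {c (Suc s)}"
    then show "boot_step r V (B \<union> d ` {0..s}) - (B \<union> d ` {0..s}) = {d (Suc s)}"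
      using img[of s] assms(1)[of "Suc s"] by (metis less_imp_le_nat Suc_leI)
  qed (use img[of T] assms(1)[of 0] in simp_all)
qed

lemma boot_eq_run_state:
  assumes steps: "\<forall>i\<in>{1..T}. boot r V (B \<union> {c 0}) i - boot r V (B \<union> {c 0}) (i - 1) = {c i}"
    and "s \<le> T"
  shows "boot r V (B \<union> {c 0}) s = B \<union> c ` {0..s}"
proof -
  have "{0..s} = insert 0 {1..s}" by auto
  then show ?thesis using boot_chain[OF steps assms(2)] by auto
qed

lemma sequential_run_of_steps:
  assumes steps: "\<forall>i\<in>{1..T}. boot r V (B \<union> {c 0}) i - boot r V (B \<union> {c 0}) (i - 1) = {c i}"
    and "c 0 \<notin> B" and "stationary r V (B \<union> c ` {0..T})"
  shows "sequential_run r V B T c"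
proof -
  have "boot_step r V (B \<union> c ` {0..s}) - (B \<union> c ` {0..s}) = {c (Suc s)}" if "s < T" for s
  proof -
    have "Suc s \<in> {1..T}" using that by simp
    then have "boot r V (B \<union> {c 0}) (Suc s) - boot r V (B \<union> {c 0}) (Suc s - 1) = {c (Suc s)}"
      using steps by blast
    then show ?thesis
      using boot_eq_run_state[OF steps, of s] boot_eq_run_state[OF steps, of "Suc s"] that
      by (simp add: boot_Suc)
  qed
  then show ?thesis using assms(2,3) unfolding sequential_run_def by blast
qed

lemma sequential_last_notin:
  assumes "sequential k r V H es T" and "1 \<le> T"
  shows "es T \<notin> H"
proof
  assume "es T \<in> H"
  then have "es T \<in> boot r V H (T - 1)" using subset_boot by blast
  moreover have "boot r V H T - boot r V H (T - 1) = {es T}"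
    using assms unfolding sequential_def by auto
  ultimately show False by blast
qed

lemma sequential_forward_run:
  assumes seq: "sequential k r V H es T"
  shows "sequential_run r V (H - {es 0}) T es"
proof -
  have "es 0 \<in> H" using seq unfolding sequential_def by blast
  then have start: "H - {es 0} \<union> {es 0} = H" by blast
  have steps: "\<forall>i\<in>{1..T}. boot r V H i - boot r V H (i - 1) = {es i}"
    and stops: "boot r V H (Suc T) = boot r V H T"
    using seq unfolding sequential_def by blast+
  have "stationary r V (H - {es 0} \<union> es ` {0..T})"
    using boot_eq_run_state[of T r V "H - {es 0}" es T] steps stops
    unfolding start stationary_def by (simp add: boot_Suc)
  then show ?thesis using sequential_run_of_steps[of T r V "H - {es 0}" es] steps
    unfolding start by blast
qed

lemma sequential_backward_run:
  assumes seq: "sequential k r V H es T" and T: "1 \<le> T"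
  shows "sequential_run r V (H - {es 0}) T (\<lambda>i. es (T - i))"
proof -
  define B where "B = H - {es 0}"
  define c where "c i = es (T - i)" for i
  have "es T \<noteq> es 0"
    using seq sequential_last_notin[OF seq T] unfolding sequential_def by auto
  then have start: "H \<union> {es T} - {es 0} = B \<union> {c 0}" unfolding B_def c_def by auto
  have steps: "\<forall>i\<in>{1..T}. boot r V (B \<union> {c 0}) i - boot r V (B \<union> {c 0}) (i - 1) = {c i}"
    using seq unfolding sequential_def start c_def by blast
  have "(\<lambda>i. T - i) ` {0..T} = {0..T}"
  proof (intro equalityI subsetI)
    fix x assume "x \<in> {0..T}"
    then have "x = T - (T - x)" "T - x \<in> {0..T}" by auto
    then show "x \<in> (\<lambda>i. T - i) ` {0..T}" by blast
  qed auto
  then have "c ` {0..T} = es ` {0..T}" unfolding c_def by (metis image_image)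
  then have "stationary r V (B \<union> c ` {0..T})"
    using sequential_forward_run[OF seq] unfolding sequential_run_def B_def by simp
  moreover have "c 0 \<notin> B" using sequential_last_notin[OF seq T] unfolding B_def c_def by simp
  ultimately show ?thesis using sequential_run_of_steps[OF steps] unfolding B_def c_def by blast
qed

lemma UN_reflect: "(\<Union>p\<in>{1..l}. h (l - p)) = (\<Union>p<l. h p)" for l :: nat
proof -
  have "(\<lambda>p. l - p) ` {1..l} = {..<l}"
  proof (intro equalityI subsetI)
    fix x assume "x \<in> {..<l}"
    then have "x = l - (l - x)" "l - x \<in> {1..l}" by auto
    then show "x \<in> (\<lambda>p. l - p) ` {1..l}" by blast
  qed auto
  moreover have "(\<Union>p\<in>{1..l}. h (l - p)) = \<Union> (h ` (\<lambda>p. l - p) ` {1..l})"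
    by (simp add: image_image)
  ultimately show ?thesis by simp
qed

lemma UN_reflect_less: "(\<Union>p<l. h (l - 1 - p)) = (\<Union>p<l. h p)" for l :: nat
proof -
  have "(\<lambda>p. l - 1 - p) ` {..<l} = {..<l}"
  proof (intro equalityI subsetI)
    fix x assume "x \<in> {..<l}"
    then have "x = l - 1 - (l - 1 - x)" "l - 1 - x \<in> {..<l}" by auto
    then show "x \<in> (\<lambda>p. l - 1 - p) ` {..<l}" by blast
  qed auto
  moreover have "(\<Union>p<l. h (l - 1 - p)) = \<Union> (h ` (\<lambda>p. l - 1 - p) ` {..<l})"
    by (simp add: image_image)
  ultimately show ?thesis by simp
qed

lemma UN_consecutive_pairs:
  "(\<Union>j\<in>{1..n}. F (2 * j - 2) \<union> F (2 * j - 1)) = (\<Union>p<2 * n. F p)" for n :: nat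
proof (intro equalityI subsetI)
  fix x assume "x \<in> (\<Union>j\<in>{1..n}. F (2 * j - 2) \<union> F (2 * j - 1))"
  then obtain j where "j \<in> {1..n}" "x \<in> F (2 * j - 2) \<or> x \<in> F (2 * j - 1)" by blast
  moreover have "2 * j - 2 < 2 * n" "2 * j - 1 < 2 * n" using \<open>j \<in> {1..n}\<close> by auto
  ultimately show "x \<in> (\<Union>p<2 * n. F p)" by auto
next
  fix x assume "x \<in> (\<Union>p<2 * n. F p)"
  then obtain p where p: "p < 2 * n" "x \<in> F p" by blast
  define j where "j = p div 2 + 1"
  have "j \<in> {1..n}" using p(1) unfolding j_def by auto
  moreover have "p = 2 * j - 2 \<or> p = 2 * j - 1" unfolding j_def by presburger
  then have "x \<in> F (2 * j - 2) \<union> F (2 * j - 1)" using p(2) by auto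
  ultimately show "x \<in> (\<Union>j\<in>{1..n}. F (2 * j - 2) \<union> F (2 * j - 1))" by blast
qed

lemma lex_less:
  fixes q s n l t :: nat
  assumes "s < n" "q * n + s < l * n + t" "t < n"
  shows "q < l \<or> q = l \<and> s < t"
proof (rule ccontr)
  assume "\<not> (q < l \<or> q = l \<and> s < t)"
  then consider "q = l" "t \<le> s" | "Suc l \<le> q" by linarith
  then show False
  proof cases
    case 2
    have "Suc l * n \<le> q * n" using 2 by (rule mult_le_mono1)
    then have "l * n + n \<le> q * n" by simp
    then show False using assms by linarith
  qed (use assms in simp)
qed

lemma divmod_eq: "(x :: nat) = q * n + s \<Longrightarrow> s < n \<Longrightarrow> x div n = q \<and> x mod n = s"
  by simp

lemma UN_atMost_split: "(\<Union>p\<le>n. F p) = F 0 \<union> (\<Union>p\<in>{1..n}. F p)" for n :: nat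
proof -
  have "{..n} = insert 0 {1..n}" by auto
  then show ?thesis by simp
qed

section \<open>The seed and its copies\<close>

lemma gadget_sym: "gadget r c b a D = gadget r a b c D"
  unfolding gadget_def by (auto simp: insert_commute)

lemma gadget_image:
  assumes inj: "inj_on f U" and abc: "a \<in> U" "b \<in> U" "c \<in> U" and D: "D \<subseteq> U"
  shows "(`) f ` gadget r a b c D = gadget r (f a) (f b) (f c) (f ` D)"
proof (intro equalityI subsetI)
  fix x assume "x \<in> (`) f ` gadget r a b c D"
  then obtain e where x: "x = f ` e"
    and e: "e \<subseteq> {a, b, c} \<union> D" "card e = r" "\<not> {a, c} \<subseteq> e" "\<not> D \<subseteq> e"
    unfolding gadget_def by blast
  have eU: "e \<subseteq> U" using e(1) abc D by blast
  have mem: "u \<in> U \<Longrightarrow> f u \<in> x \<longleftrightarrow> u \<in> e" for u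
    unfolding x using inj_on_image_mem_iff[OF inj _ eU] by blast
  have "x \<subseteq> {f a, f b, f c} \<union> f ` D" using x e(1) by blast
  moreover have "card x = r" using x e(2) card_image[OF inj_on_subset[OF inj eU]] by simp
  moreover have "\<not> {f a, f c} \<subseteq> x" using mem abc e(3) by auto
  moreover have "\<not> f ` D \<subseteq> x" using mem D e(4) by auto
  ultimately show "x \<in> gadget r (f a) (f b) (f c) (f ` D)" unfolding gadget_def by blast
next
  fix x assume "x \<in> gadget r (f a) (f b) (f c) (f ` D)"
  then have x: "x \<subseteq> f ` ({a, b, c} \<union> D)" "card x = r" "\<not> {f a, f c} \<subseteq> x" "\<not> f ` D \<subseteq> x"
    unfolding gadget_def by auto
  obtain e where e: "e \<subseteq> {a, b, c} \<union> D" "x = f ` e" using x(1) by (rule subset_imageE)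
  have eU: "e \<subseteq> U" using e(1) abc D by blast
  have "card e = r" using x(2) e(2) card_image[OF inj_on_subset[OF inj eU]] by simp
  moreover have "\<not> {a, c} \<subseteq> e" "\<not> D \<subseteq> e" using x(3,4) e(2) by blast+
  ultimately have "e \<in> gadget r a b c D" using e(1) unfolding gadget_def by blast
  then show "x \<in> (`) f ` gadget r a b c D" using e(2) by blast
qed

locale seed =
  fixes r k T1 :: nat and H1 :: "vert set set" and es :: "nat \<Rightarrow> vert set"
  assumes r: "3 \<le> r" and k: "2 \<le> k" and T1: "1 \<le> T1"
    and H1_edges: "\<And>f. f \<in> H1 \<Longrightarrow> f \<subseteq> Astar k (r - 1) \<union> {(r, 1)} \<and> card f = r"
    and es_edges: "\<And>i. i \<le> T1 \<Longrightarrow>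
      es i \<subseteq> Astar k (r - 1) \<union> {(r, 1)} \<and> card (es i) = r \<and> (r, 1) \<in> es i"
    and es_0: "es 0 \<in> H1"
    and base_stationary: "stationary r (Astar k (r - 1) \<union> {(r, 1)}) (H1 - {es 0})"
    and forward: "sequential_run r (Astar k (r - 1) \<union> {(r, 1)}) (H1 - {es 0}) T1 es"
    and backward: "sequential_run r (Astar k (r - 1) \<union> {(r, 1)}) (H1 - {es 0}) T1 (\<lambda>i. es (T1 - i))"
begin

definition Alow :: "vert set" where "Alow = Astar k (r - 1)"
definition Vseed :: "vert set" where "Vseed = Alow \<union> {(r, 1)}"
definition V :: "vert set" where "V = Astar k r"
definition B :: "vert set set" where "B = H1 - {es 0}"
definition L :: nat where "L = 2 * k - 2"
definition run :: "nat \<Rightarrow> nat \<Rightarrow> vert set" where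
  "run p = (if even p then es else (\<lambda>i. es (T1 - i)))"
definition to_copy :: "nat \<Rightarrow> vert \<Rightarrow> vert" where
  "to_copy m u = (if u = (r, 1) then (r, m) else u)"
definition copy :: "nat \<Rightarrow> vert set \<Rightarrow> vert set" where "copy m g = to_copy m ` g"
definition link :: "nat \<Rightarrow> vert set" where "link p = run p T1 - {(r, 1)}"
definition gadget_at :: "nat \<Rightarrow> vert set set" where
  "gadget_at p = gadget r (r, 2 * p + 1) (r, 2 * p + 2) (r, 2 * p + 3) (link p)"
definition Gadgets :: "vert set set" where "Gadgets = (\<Union>p<L. gadget_at p)"

text \<open>Copy \<open>p \<le> L\<close> of the seed sits on \<open>v\<^sup>r\<^sub>2\<^sub>p\<^sub>+\<^sub>1\<close> and replays \<open>run p\<close>; gadget \<open>p < L\<close>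
  joins copies \<open>p\<close> and \<open>p + 1\<close>, whose runs meet in \<open>link p\<close>. In the paper's notation copy \<open>p\<close>
  is \<open>H\<^sub>2\<^sub>p\<^sub>+\<^sub>1\<close> and gadget \<open>p\<close> is \<open>H\<^sub>2\<^sub>p\<^sub>+\<^sub>2\<close>. A state of the glued graph is given by the states
  \<open>R p\<close> of the copies and the set \<open>M\<close> of gadgets whose middle edge is infected.\<close>

definition glued :: "(nat \<Rightarrow> vert set set) \<Rightarrow> nat set \<Rightarrow> vert set set" where
  "glued R M = Gadgets \<union> (\<Union>p\<le>L. copy (2 * p + 1) ` R p)
  \<union> (\<lambda>p. insert (r, 2 * p + 2) (link p)) ` M"

definition new :: "vert set set \<Rightarrow> vert set set" where "new G = boot_step r V G - G"
definition new_seed :: "vert set set \<Rightarrow> vert set set" where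
  "new_seed G = boot_step r Vseed G - G"

definition spread :: "vert set set \<Rightarrow> vert set set" where
  "spread G = {insert (r, x) (link p) | p x y. p < L \<and>
  x \<in> {2 * p + 1, 2 * p + 2, 2 * p + 3} \<and> y \<in> {2 * p + 1, 2 * p + 2, 2 * p + 3} \<and>
  (y = Suc x \<or> x = Suc y) \<and> insert (r, y) (link p) \<in> G \<and> insert (r, x) (link p) \<notin> G}"

lemma Astar_iff: "u \<in> Astar k i \<longleftrightarrow> 1 \<le> fst u \<and> fst u \<le> i \<and> 1 \<le> snd u \<and> snd u \<le> 4 * k - 3"
  by (cases u) (auto simp: Astar_def Aset_def vtx_def)

lemma Alow_iff: "u \<in> Alow \<longleftrightarrow> 1 \<le> fst u \<and> fst u \<le> r - 1 \<and> 1 \<le> snd u \<and> snd u \<le> 4 * k - 3"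
  by (simp add: Alow_def Astar_iff)

lemma V_iff: "u \<in> V \<longleftrightarrow> 1 \<le> fst u \<and> fst u \<le> r \<and> 1 \<le> snd u \<and> snd u \<le> 4 * k - 3"
  by (simp add: V_def Astar_iff)

lemma Vseed_eq: "Vseed = Astar k (r - 1) \<union> {(r, 1)}"
  by (simp add: Vseed_def Alow_def)

lemma top_notin_Alow [simp]: "(r, x) \<notin> Alow"
  using r by (simp add: Alow_iff)

lemma Alow_subset_V: "Alow \<subseteq> V"
  by (auto simp: Alow_iff V_iff)

lemma top_in_V: "1 \<le> x \<Longrightarrow> x \<le> 4 * k - 3 \<Longrightarrow> (r, x) \<in> V"
  using r by (simp add: V_iff)

lemma finite_V: "finite V"
proof -
  have "V \<subseteq> {1..r} \<times> {1..4 * k - 3}" by (auto simp: V_iff)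
  then show ?thesis by (rule finite_subset) simp
qed

lemma in_V_below_top: "u \<in> V \<Longrightarrow> fst u \<noteq> r \<Longrightarrow> u \<in> Alow"
  by (auto simp: V_iff Alow_iff)

lemma to_copy_inj: "inj_on (to_copy m) Vseed"
  by (auto simp: inj_on_def to_copy_def Vseed_def)

lemma card_copy: "g \<subseteq> Vseed \<Longrightarrow> card (copy m g) = card g"
  unfolding copy_def by (meson card_image to_copy_inj inj_on_subset)

lemma copy_subset: "g \<subseteq> Vseed \<Longrightarrow> copy m g \<subseteq> Alow \<union> {(r, m)}"
  by (auto simp: copy_def to_copy_def Vseed_def)

lemma copy_subset_V: "g \<subseteq> Vseed \<Longrightarrow> 1 \<le> m \<Longrightarrow> m \<le> 4 * k - 3 \<Longrightarrow> copy m g \<subseteq> V"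
  using copy_subset[of g m] Alow_subset_V top_in_V[of m] by auto

lemma top_in_copy: "g \<subseteq> Vseed \<Longrightarrow> (r, x) \<in> copy m g \<Longrightarrow> x = m"
  using copy_subset[of g m] by auto

lemma copy_inject: "g \<subseteq> Vseed \<Longrightarrow> g' \<subseteq> Vseed \<Longrightarrow> copy m g = copy m g' \<Longrightarrow> g = g'"
  unfolding copy_def by (meson to_copy_inj inj_on_image_eq_iff)

lemma copy_id: "(r, 1) \<notin> g \<Longrightarrow> copy m g = g"
  by (auto simp: copy_def to_copy_def image_iff)

lemma copy_1 [simp]: "copy (Suc 0) g = g"
  by (simp add: copy_def to_copy_def)

lemma top_in_copy_if: "(r, 1) \<in> g \<Longrightarrow> (r, m) \<in> copy m g"
  by (force simp: copy_def to_copy_def)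

lemma copy_insert_top: "(r, 1) \<in> g \<Longrightarrow> copy m g = insert (r, m) (g - {(r, 1)})"
  by (auto simp: copy_def to_copy_def)

definition to_seed :: "nat \<Rightarrow> vert \<Rightarrow> vert" where
  "to_seed m u = (if u = (r, m) then (r, 1) else u)"

lemma to_seed_subset: "Z \<subseteq> Alow \<union> {(r, m)} \<Longrightarrow> to_seed m ` Z \<subseteq> Vseed"
  by (auto simp: to_seed_def Vseed_def)

lemma to_copy_to_seed: "u \<in> Alow \<union> {(r, m)} \<Longrightarrow> to_copy m (to_seed m u) = u"
  by (auto simp: to_seed_def to_copy_def)

lemma copy_to_seed: "Z \<subseteq> Alow \<union> {(r, m)} \<Longrightarrow> copy m (to_seed m ` Z) = Z"
proof -
  assume "Z \<subseteq> Alow \<union> {(r, m)}"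
  then have "to_copy m (to_seed m u) = u" if "u \<in> Z" for u
    using that to_copy_to_seed by blast
  then show ?thesis unfolding copy_def image_image by simp
qed

lemma copy_eq_other_copy:
  assumes g: "g \<subseteq> Vseed" and g': "g' \<subseteq> Vseed" and pq: "p \<noteq> q"
    and eq: "copy (2 * p + 1) g = copy (2 * q + 1) g'"
  shows "(r, 1) \<notin> g' \<and> g = g'"
proof -
  have g'1: "(r, 1) \<notin> g'"
  proof
    assume "(r, 1) \<in> g'"
    then have "(r, 2 * q + 1) \<in> copy (2 * p + 1) g" unfolding eq by (rule top_in_copy_if)
    then show False using top_in_copy[OF g] pq by fastforce
  qed
  then have gg': "copy (2 * p + 1) g = g'" using eq copy_id[of g'] by simp
  have "g = g'"
  proof (cases "(r, 1) \<in> g")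
    case True
    then have "(r, 2 * p + 1) \<in> Vseed" using gg' top_in_copy_if g' by blast
    then have "p = 0" by (simp add: Vseed_def)
    then show ?thesis using gg' by simp
  next
    case False
    then show ?thesis using gg' copy_id[of g] by simp
  qed
  with g'1 show ?thesis by blast
qed

lemma run_edges: "i \<le> T1 \<Longrightarrow> run p i \<subseteq> Vseed \<and> card (run p i) = r \<and> (r, 1) \<in> run p i"
  using es_edges[of i] es_edges[of "T1 - i"] by (simp add: run_def Vseed_eq)

lemma run_Suc_0: "run (Suc p) 0 = run p T1"
  by (simp add: run_def)

lemma link_subset_Alow: "link p \<subseteq> Alow"
  using run_edges[of T1 p] unfolding link_def Vseed_def by blast

lemma finite_link: "finite (link p)"
  using finite_subset[OF link_subset_Alow finite_subset[OF Alow_subset_V finite_V]] .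

lemma card_link: "card (link p) = r - 1"
  using run_edges[of T1 p] by (simp add: link_def)

lemma top_notin_link [simp]: "(r, x) \<notin> link p"
  using link_subset_Alow top_notin_Alow by blast

lemma card_insert_link: "card (insert (r, x) (link p)) = r"
  using card_link[of p] r card_insert_disjoint[OF finite_link[of p] top_notin_link[of x p]] by simp

lemma copy_run_end: "copy m (run p T1) = insert (r, m) (link p)"
  using run_edges[of T1 p] by (simp add: copy_insert_top link_def)

lemma copy_run_start: "copy (2 * Suc p + 1) (run (Suc p) 0) = insert (r, 2 * p + 3) (link p)"
proof -
  have "2 * Suc p + 1 = 2 * p + 3" by simp
  then show ?thesis unfolding run_Suc_0 by (simp only: copy_run_end)
qed

lemma card_less_if_link_missing:
  assumes "f \<subseteq> insert t (link p)" "\<not> link p \<subseteq> f"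
  shows "card f < r"
proof -
  obtain d where d: "d \<in> link p" "d \<notin> f" using assms(2) by blast
  have "f \<subseteq> insert t (link p - {d})" using assms(1) d by auto
  then have "card f \<le> card (insert t (link p - {d}))"
    using finite_link[of p] by (intro card_mono) auto
  also have "\<dots> \<le> Suc (card (link p - {d}))" by (simp add: card_insert_le_m1)
  also have "\<dots> = r - 1" using finite_link[of p] card_link[of p] d r by simp
  finally show ?thesis using r by simp
qed

lemma gadget_at_edgeD:
  assumes "f \<in> gadget_at p"
  shows "f \<subseteq> {(r, 2 * p + 1), (r, 2 * p + 2), (r, 2 * p + 3)} \<union> link p" and "card f = r"
    and "(r, 2 * p + 2) \<in> f" and "(r, 2 * p + 1) \<in> f \<or> (r, 2 * p + 3) \<in> f"
    and "\<not> ((r, 2 * p + 1) \<in> f \<and> (r, 2 * p + 3) \<in> f)" and "\<not> link p \<subseteq> f"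
proof -
  show f: "f \<subseteq> {(r, 2 * p + 1), (r, 2 * p + 2), (r, 2 * p + 3)} \<union> link p" "card f = r"
    "\<not> ((r, 2 * p + 1) \<in> f \<and> (r, 2 * p + 3) \<in> f)" "\<not> link p \<subseteq> f"
    using assms by (auto simp: gadget_at_def gadget_def)
  text \<open>Without the middle vertex, or with it alone, \<open>f\<close> would lie in a single vertex plus
    a proper subset of the \<open>(r - 1)\<close>-set \<open>link p\<close>.\<close>
  show "(r, 2 * p + 2) \<in> f"
  proof (rule ccontr)
    assume "(r, 2 * p + 2) \<notin> f"
    then have "f \<subseteq> insert (r, 2 * p + 1) (link p) \<or> f \<subseteq> insert (r, 2 * p + 3) (link p)"
      using f by auto
    then show False
      using card_less_if_link_missing[of f "(r, 2 * p + 1)" p]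
        card_less_if_link_missing[of f "(r, 2 * p + 3)" p] f(2,4) by auto
  qed
  show "(r, 2 * p + 1) \<in> f \<or> (r, 2 * p + 3) \<in> f"
  proof (rule ccontr)
    assume "\<not> ((r, 2 * p + 1) \<in> f \<or> (r, 2 * p + 3) \<in> f)"
    then have "f \<subseteq> insert (r, 2 * p + 2) (link p)" using f by auto
    then show False using card_less_if_link_missing[of f "(r, 2 * p + 2)" p] f(2,4) by simp
  qed
qed

lemma gadget_tops_in_V: "p < L \<Longrightarrow> x \<in> {2 * p + 1, 2 * p + 2, 2 * p + 3} \<Longrightarrow> (r, x) \<in> V"
  using top_in_V by (auto simp: L_def)

lemma gadget_at_subset_V:
  assumes "p < L" and "f \<in> gadget_at p"
  shows "f \<subseteq> V"
proof -
  have "{(r, 2 * p + 1), (r, 2 * p + 2), (r, 2 * p + 3)} \<subseteq> V"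
    using gadget_tops_in_V[OF assms(1)] by simp
  then show ?thesis
    using gadget_at_edgeD(1)[OF assms(2)] link_subset_Alow[of p] Alow_subset_V by blast
qed

lemma edge_with_adjacent_tops_in_gadget_at:
  assumes x: "x \<in> {2 * p + 1, 2 * p + 2, 2 * p + 3}" and y: "y \<in> {2 * p + 1, 2 * p + 2, 2 * p + 3}"
    and xy: "y = Suc x \<or> x = Suc y"
    and f: "f \<subseteq> insert (r, y) (insert (r, x) (link p))" "(r, x) \<in> f" "(r, y) \<in> f" "card f = r"
  shows "f \<in> gadget_at p"
  unfolding gadget_at_def gadget_def
proof (intro CollectI conjI)
  show "f \<subseteq> {(r, 2 * p + 1), (r, 2 * p + 2), (r, 2 * p + 3)} \<union> link p" using f(1) x y by auto
  show "\<not> {(r, 2 * p + 1), (r, 2 * p + 3)} \<subseteq> f"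
  proof
    assume "{(r, 2 * p + 1), (r, 2 * p + 3)} \<subseteq> f"
    then have "2 * p + 1 \<in> {x, y}" "2 * p + 3 \<in> {x, y}" using f(1) by auto
    then show False using xy by auto
  qed
  show "\<not> link p \<subseteq> f"
  proof
    assume "link p \<subseteq> f"
    then have "insert (r, y) (insert (r, x) (link p)) = f" using f by blast
    moreover have "(r, y) \<notin> insert (r, x) (link p)" using xy by auto
    ultimately have "card f = Suc r"
      using card_insert_disjoint[OF finite_insert[THEN iffD2, OF finite_link]] card_insert_link by metis
    then show False using f(4) by simp
  qed
qed (rule f(4))

lemma B_edges: "g \<in> B \<Longrightarrow> g \<subseteq> Vseed \<and> card g = r"
  using H1_edges by (auto simp: B_def Vseed_eq)

end

section \<open>Infection in the glued graph\<close>

locale glued_states = seed +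
  fixes R :: "nat \<Rightarrow> vert set set" and M :: "nat set"
  assumes B_subset_R: "\<And>p. p \<le> L \<Longrightarrow> B \<subseteq> R p"
    and R_edges: "\<And>p g. p \<le> L \<Longrightarrow> g \<in> R p \<Longrightarrow> g \<subseteq> Vseed \<and> card g = r"
    and R_without_top: "\<And>p g. p \<le> L \<Longrightarrow> g \<in> R p \<Longrightarrow> (r, 1) \<notin> g \<Longrightarrow> g \<in> B"
    and M_less: "M \<subseteq> {..<L}"
begin

lemma glued_cases:
  assumes "f \<in> glued R M"
  obtains p where "p < L" "f \<in> gadget_at p"
  | p g where "p \<le> L" "g \<in> R p" "f = copy (2 * p + 1) g"
  | p where "p \<in> M" "f = insert (r, 2 * p + 2) (link p)"
  using assms unfolding glued_def Gadgets_def by blast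

lemma gadget_at_subset_glued: "p < L \<Longrightarrow> gadget_at p \<subseteq> glued R M"
  unfolding glued_def Gadgets_def by blast

lemma middle_in_glued: "p \<in> M \<Longrightarrow> insert (r, 2 * p + 2) (link p) \<in> glued R M"
  unfolding glued_def by blast

lemma copy_in_glued_iff:
  assumes p: "p \<le> L" and g: "g \<subseteq> Vseed"
  shows "copy (2 * p + 1) g \<in> glued R M \<longleftrightarrow> g \<in> R p"
proof
  show "g \<in> R p \<Longrightarrow> copy (2 * p + 1) g \<in> glued R M"
    using p unfolding glued_def by blast
next
  assume "copy (2 * p + 1) g \<in> glued R M"
  then show "g \<in> R p"
  proof (cases rule: glued_cases)
    case (1 q)
    then have "(r, 2 * q + 2) \<in> copy (2 * p + 1) g" using gadget_at_edgeD(3) by blast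
    then have "2 * q + 2 = 2 * p + 1" using top_in_copy[OF g] by blast
    then have False by presburger
    then show ?thesis ..
  next
    case (2 q g')
    have g': "g' \<subseteq> Vseed" using R_edges[OF 2(1,2)] by blast
    show ?thesis
    proof (cases "q = p")
      case True
      then have "g = g'" using copy_inject[OF g g'] 2(3) by blast
      then show ?thesis using 2(2) True by simp
    next
      case False
      then have "(r, 1) \<notin> g'" "g = g'" using copy_eq_other_copy[OF g g' _ 2(3)] by auto
      then have "g \<in> B" using R_without_top[OF 2(1,2)] by blast
      then show ?thesis using B_subset_R[OF p] by blast
    qed
  next
    case (3 q)
    then have "(r, 2 * q + 2) \<in> copy (2 * p + 1) g" by simp
    then have "2 * q + 2 = 2 * p + 1" using top_in_copy[OF g] by blast
    then have False by presburger
    then show ?thesis ..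
  qed
qed

lemma glued_edges:
  assumes "f \<in> glued R M"
  shows "f \<subseteq> V \<and> card f = r"
  using assms
proof (cases rule: glued_cases)
  case (1 p)
  then show ?thesis using gadget_at_subset_V gadget_at_edgeD(2) by blast
next
  case (2 p g)
  then have "2 * p + 1 \<le> 4 * k - 3" using k by (simp add: L_def)
  then show ?thesis using 2 R_edges[OF 2(1,2)] copy_subset_V card_copy by simp
next
  case (3 p)
  then have "(r, 2 * p + 2) \<in> V" using gadget_tops_in_V M_less by blast
  then show ?thesis using 3 link_subset_Alow Alow_subset_V card_insert_link by blast
qed

lemma two_tops_in_glued:
  assumes "f \<in> glued R M" "(r, x) \<in> f" "(r, y) \<in> f" "x \<noteq> y"
  shows "\<exists>p<L. f \<in> gadget_at p \<and>
    (x = 2 * p + 2 \<and> (y = 2 * p + 1 \<or> y = 2 * p + 3) \<or> y = 2 * p + 2 \<and> (x = 2 * p + 1 \<or> x = 2 * p + 3))"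
  using assms(1)
proof (cases rule: glued_cases)
  case (1 p)
  have "x \<in> {2 * p + 1, 2 * p + 2, 2 * p + 3}" "y \<in> {2 * p + 1, 2 * p + 2, 2 * p + 3}"
    using gadget_at_edgeD(1)[OF 1(2)] assms(2,3) by auto
  then show ?thesis using 1 gadget_at_edgeD(5)[OF 1(2)] assms(2-4) by auto
next
  case (2 p g)
  then show ?thesis using top_in_copy R_edges[OF 2(1,2)] assms(2-4) by blast
next
  case (3 p)
  then show ?thesis using assms(2-4) by auto
qed

lemma even_top_in_glued:
  assumes "f \<in> glued R M" "(r, 2 * q + 2) \<in> f" "\<And>z. (r, z) \<in> f \<Longrightarrow> z = 2 * q + 2"
  shows "q \<in> M \<and> f = insert (r, 2 * q + 2) (link q)"
  using assms(1)
proof (cases rule: glued_cases)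
  case (1 p)
  then have "2 * p + 2 = 2 * q + 2" "2 * p + 1 = 2 * q + 2 \<or> 2 * p + 3 = 2 * q + 2"
    using gadget_at_edgeD(3,4)[OF 1(2)] assms(3) by blast+
  then have False by presburger
  then show ?thesis ..
next
  case (2 p g)
  then have "2 * q + 2 = 2 * p + 1" using top_in_copy R_edges[OF 2(1,2)] assms(2) by blast
  then have False by presburger
  then show ?thesis ..
next
  case (3 p)
  then show ?thesis using assms(2) by auto
qed

lemma completes_copy_iff:
  assumes p: "p \<le> L" and g: "g \<subseteq> Vseed" and w: "w \<in> Vseed"
  shows "completes r V (glued R M) (to_copy (2 * p + 1) w) (copy (2 * p + 1) g)
    \<longleftrightarrow> completes r Vseed (R p) w g"
proof -
  let ?m = "2 * p + 1"
  have m: "1 \<le> ?m" "?m \<le> 4 * k - 3" using p k by (auto simp: L_def)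
  have wg: "insert w g \<subseteq> Vseed" using g w by blast
  have ins: "insert (to_copy ?m w) (copy ?m g) = copy ?m (insert w g)" by (simp add: copy_def)
  have gV: "copy ?m g \<subseteq> V" using copy_subset_V[OF g m] .
  have tw: "to_copy ?m w \<in> V - copy ?m g \<longleftrightarrow> w \<in> Vseed - g"
  proof -
    have "to_copy ?m w \<in> V" using copy_subset_V[OF wg m] unfolding ins[symmetric] by blast
    moreover have "to_copy ?m w \<in> copy ?m g \<longleftrightarrow> w \<in> g"
      unfolding copy_def by (rule inj_on_image_mem_iff[OF to_copy_inj w g])
    ultimately show ?thesis using w by blast
  qed
  have subsets: "(\<forall>f. f \<subseteq> copy ?m (insert w g) \<and> card f = r \<and> f \<noteq> copy ?m g \<longrightarrow> f \<in> glued R M)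
    \<longleftrightarrow> (\<forall>f. f \<subseteq> insert w g \<and> card f = r \<and> f \<noteq> g \<longrightarrow> f \<in> R p)"
  proof (intro iffI allI impI; elim conjE)
    fix f assume G: "\<forall>f. f \<subseteq> copy ?m (insert w g) \<and> card f = r \<and> f \<noteq> copy ?m g \<longrightarrow> f \<in> glued R M"
      and f: "f \<subseteq> insert w g" "card f = r" "f \<noteq> g"
    have fV: "f \<subseteq> Vseed" using f(1) wg by blast
    have "copy ?m f \<subseteq> copy ?m (insert w g)" using f(1) unfolding copy_def by (rule image_mono)
    moreover have "card (copy ?m f) = r" using card_copy[OF fV] f(2) by simp
    moreover have "copy ?m f \<noteq> copy ?m g" using copy_inject[OF fV g] f(3) by blast
    ultimately have "copy ?m f \<in> glued R M" using G by blast
    then show "f \<in> R p" using copy_in_glued_iff[OF p fV] by blast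
  next
    fix f assume Rp: "\<forall>f. f \<subseteq> insert w g \<and> card f = r \<and> f \<noteq> g \<longrightarrow> f \<in> R p"
      and f: "f \<subseteq> copy ?m (insert w g)" "card f = r" "f \<noteq> copy ?m g"
    obtain f' where f': "f' \<subseteq> insert w g" "f = copy ?m f'"
      using f(1) unfolding copy_def by (rule subset_imageE)
    have fV: "f' \<subseteq> Vseed" using f'(1) wg by blast
    have "card f' = r" using card_copy[OF fV] f(2) f'(2) by simp
    moreover have "f' \<noteq> g" using f(3) f'(2) by blast
    ultimately have "f' \<in> R p" using Rp f'(1) by blast
    then show "f \<in> glued R M" using copy_in_glued_iff[OF p fV] f'(2) by blast
  qed
  show ?thesis
    unfolding completes_def ins using gV tw subsets g card_copy[OF g] by (simp only: simp_thms)
qed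

end

locale glued_completion = glued_states +
  fixes e w
  assumes completes: "completes r V (glued R M) w e" and e_new: "e \<notin> glued R M"
begin

definition S :: "vert set" where "S = insert w e"

lemma S_subset_V: "S \<subseteq> V" and card_S: "card S = Suc r" and e_eq: "e = S - {w}"
  and w_in_S: "w \<in> S" and w_notin_e: "w \<notin> e" and card_e: "card e = r"
proof -
  have e: "e \<subseteq> V" "card e = r" "w \<in> V - e"
    using completes by (auto simp: completes_def)
  have "finite e" using finite_subset[OF e(1) finite_V] .
  then show "S \<subseteq> V" "card S = Suc r" "e = S - {w}" "w \<in> S" "w \<notin> e" "card e = r"
    using e unfolding S_def by auto
qed

lemma finite_S: "finite S"
  using finite_subset[OF S_subset_V finite_V] .

lemma S_minus_in_glued:
  assumes "y \<in> S" "y \<noteq> w"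
  shows "S - {y} \<in> glued R M"
proof -
  have "S - {y} \<subseteq> insert w e" "card (S - {y}) = r" "S - {y} \<noteq> e"
    using assms card_S finite_S w_notin_e unfolding S_def by auto
  then show ?thesis using completes unfolding completes_def by blast
qed

lemma S_not_subset: "finite X \<Longrightarrow> card X \<le> r \<Longrightarrow> \<exists>z\<in>S. z \<notin> X"
  using card_mono[of X S] card_S by auto

lemma two_tops_in_S:
  assumes "(r, x) \<in> S" "(r, y) \<in> S" "x \<noteq> y"
  shows "\<exists>p<L. x = 2 * p + 2 \<and> (y = 2 * p + 1 \<or> y = 2 * p + 3) \<or>
    y = 2 * p + 2 \<and> (x = 2 * p + 1 \<or> x = 2 * p + 3)"
proof -
  have "card {(r, x), (r, y), w} \<le> 3" by (simp add: card_insert_le_m1)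
  then have "card {(r, x), (r, y), w} \<le> r" using r by simp
  then obtain z where z: "z \<in> S" "z \<notin> {(r, x), (r, y), w}"
    using S_not_subset[of "{(r, x), (r, y), w}"] by auto
  then have "S - {z} \<in> glued R M" using S_minus_in_glued by blast
  moreover have "(r, x) \<in> S - {z}" "(r, y) \<in> S - {z}" using assms z by auto
  ultimately show ?thesis using two_tops_in_glued assms(3) by blast
qed

lemma at_most_two_tops_in_S:
  assumes "(r, x) \<in> S" "(r, y) \<in> S" "x \<noteq> y" "(r, z) \<in> S"
  shows "z = x \<or> z = y"
proof (rule ccontr)
  have adj: "x' = Suc y' \<or> y' = Suc x'" if "(r, x') \<in> S" "(r, y') \<in> S" "x' \<noteq> y'" for x' y'
    using two_tops_in_S[OF that] by auto
  assume "\<not> (z = x \<or> z = y)"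
  then show False using adj[OF assms(1-3)] adj[OF assms(1,4)] adj[OF assms(4,2)] by auto
qed

lemma lower_part_of_S:
  assumes "(r, x) \<in> S" "(r, y) \<in> S" "x \<noteq> y"
  shows "S - {(r, x), (r, y)} \<subseteq> Alow" and "card (S - {(r, x), (r, y)}) = r - 1"
proof -
  show "S - {(r, x), (r, y)} \<subseteq> Alow"
  proof
    fix u assume u: "u \<in> S - {(r, x), (r, y)}"
    have "fst u \<noteq> r"
      using u at_most_two_tops_in_S[OF assms, of "snd u"] by (metis DiffE insertCI prod.collapse)
    then show "u \<in> Alow" using u S_subset_V in_V_below_top by blast
  qed
  show "card (S - {(r, x), (r, y)}) = r - 1"
    using card_S finite_S assms by (simp add: card_Diff_subset)
qed

text \<open>If \<open>w\<close> were a lower vertex, \<open>e\<close> would already be an edge of a gadget.\<close>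

lemma two_tops_witness_is_top:
  assumes xy: "(r, x) \<in> S" "(r, y) \<in> S" "x \<noteq> y"
  shows "w \<in> {(r, x), (r, y)}"
proof (rule ccontr)
  let ?Lo = "S - {(r, x), (r, y)}"
  assume w: "w \<notin> {(r, x), (r, y)}"
  have "2 \<le> card ?Lo" using lower_part_of_S(2)[OF xy] r by simp
  then obtain y1 where y1: "y1 \<in> ?Lo" "y1 \<noteq> w"
    by (metis card_le_Suc0_iff_eq finite_Diff finite_S not_less_eq_eq numeral_2_eq_2)
  have "S - {y1} \<in> glued R M" using S_minus_in_glued y1 by blast
  then obtain p where p: "p < L" "S - {y1} \<in> gadget_at p" and
    pat: "x = 2 * p + 2 \<and> (y = 2 * p + 1 \<or> y = 2 * p + 3) \<or> y = 2 * p + 2 \<and> (x = 2 * p + 1 \<or> x = 2 * p + 3)"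
    using two_tops_in_glued[of "S - {y1}" x y] xy y1 by blast
  obtain mid oth where mo: "{x, y} = {mid, oth}" "mid = 2 * p + 2" "oth = 2 * p + 1 \<or> oth = 2 * p + 3"
    using pat by blast
  have tops: "(r, z) \<in> S \<Longrightarrow> z = mid \<or> z = oth" for z
    using at_most_two_tops_in_S[OF xy] mo(1) by (auto simp: doubleton_eq_iff)
  have "(r, oth) \<in> S" "(r, mid) \<in> S" "mid \<noteq> oth" using xy mo by (auto simp: doubleton_eq_iff)
  moreover have "(r, oth) \<noteq> w" using w mo(1) by (auto simp: doubleton_eq_iff)
  ultimately have "S - {(r, oth)} \<in> glued R M" "(r, 2 * p + 2) \<in> S - {(r, oth)}"
    using S_minus_in_glued mo(2) by auto
  then have mid_edge: "S - {(r, oth)} = insert (r, 2 * p + 2) (link p)"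
    using even_top_in_glued[of "S - {(r, oth)}" p] tops mo(2) by blast
  have lower_link: "u \<in> link p" if "u \<in> S" "u \<notin> {(r, x), (r, y)}" for u
    using that mid_edge mo by (auto simp: doubleton_eq_iff)
  have "e \<in> gadget_at p"
    unfolding gadget_at_def gadget_def
  proof (intro CollectI conjI)
    show "e \<subseteq> {(r, 2 * p + 1), (r, 2 * p + 2), (r, 2 * p + 3)} \<union> link p"
      using lower_link mo e_eq by (auto simp: doubleton_eq_iff)
    show "\<not> {(r, 2 * p + 1), (r, 2 * p + 3)} \<subseteq> e"
    proof
      assume "{(r, 2 * p + 1), (r, 2 * p + 3)} \<subseteq> e"
      then have "2 * p + 1 = oth" "2 * p + 3 = oth"
        using tops[of "2 * p + 1"] tops[of "2 * p + 3"] e_eq mo(2) by auto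
      then show False by simp
    qed
    show "\<not> link p \<subseteq> e" using lower_link[of w] w w_in_S w_notin_e by blast
  qed (rule card_e)
  then show False using e_new gadget_at_subset_glued p(1) by blast
qed

lemma two_tops_spread:
  assumes xy: "(r, x) \<in> S" "(r, y) \<in> S" "x \<noteq> y"
  shows "e \<in> spread (glued R M)"
proof -
  let ?Lo = "S - {(r, x), (r, y)}"
  have w: "w \<in> {(r, x), (r, y)}" using two_tops_witness_is_top[OF xy] .
  have "2 \<le> card ?Lo" using lower_part_of_S(2)[OF xy] r by simp
  then obtain y1 y2 where y12: "y1 \<in> ?Lo" "y2 \<in> ?Lo" "y1 \<noteq> y2"
    by (metis card_le_Suc0_iff_eq finite_Diff finite_S not_less_eq_eq numeral_2_eq_2)
  have gadget: "\<exists>p<L. S - {u} \<in> gadget_at p \<and>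
      (x = 2 * p + 2 \<and> (y = 2 * p + 1 \<or> y = 2 * p + 3) \<or> y = 2 * p + 2 \<and> (x = 2 * p + 1 \<or> x = 2 * p + 3))"
    if "u \<in> ?Lo" for u
  proof -
    have "S - {u} \<in> glued R M" using S_minus_in_glued[of u] that w by blast
    moreover have "(r, x) \<in> S - {u}" "(r, y) \<in> S - {u}" using that xy by auto
    ultimately show ?thesis using two_tops_in_glued xy(3) by blast
  qed
  obtain p where p: "p < L" "S - {y1} \<in> gadget_at p"
    and pat: "x = 2 * p + 2 \<and> (y = 2 * p + 1 \<or> y = 2 * p + 3) \<or> y = 2 * p + 2 \<and> (x = 2 * p + 1 \<or> x = 2 * p + 3)"
    using gadget[OF y12(1)] by blast
  obtain p' where p': "S - {y2} \<in> gadget_at p'"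
    and pat': "x = 2 * p' + 2 \<and> (y = 2 * p' + 1 \<or> y = 2 * p' + 3) \<or> y = 2 * p' + 2 \<and> (x = 2 * p' + 1 \<or> x = 2 * p' + 3)"
    using gadget[OF y12(2)] by blast
  have "p' = p" using pat pat' by presburger
  have "?Lo - {u} \<subseteq> link p" if "S - {u} \<in> gadget_at p" for u
    using gadget_at_edgeD(1)[OF that] lower_part_of_S(1)[OF xy] top_notin_Alow by blast
  then have "?Lo \<subseteq> link p" using p(2) p' \<open>p' = p\<close> y12(3) by blast
  moreover have "card ?Lo = card (link p)" using lower_part_of_S(2)[OF xy] card_link[of p] by simp
  ultimately have Lo: "?Lo = link p" using card_subset_eq[OF finite_link] by blast
  obtain xw xo where xwo: "w = (r, xw)" "{xw, xo} = {x, y}" "xw \<noteq> xo"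
    using w xy(3) by blast
  have Sxy: "S = insert (r, x) (insert (r, y) ?Lo)" using xy by blast
  have e: "e = insert (r, xo) (link p)" and Sxo: "S - {(r, xo)} = insert (r, xw) (link p)"
    using e_eq xwo Lo Sxy by (auto simp: doubleton_eq_iff)
  have "(r, xo) \<in> S" "(r, xo) \<noteq> w" using xwo xy by (auto simp: doubleton_eq_iff)
  then have "insert (r, xw) (link p) \<in> glued R M" using S_minus_in_glued Sxo by metis
  moreover have "xo \<in> {2 * p + 1, 2 * p + 2, 2 * p + 3}" "xw \<in> {2 * p + 1, 2 * p + 2, 2 * p + 3}"
    "xw = Suc xo \<or> xo = Suc xw"
    using pat xwo by (auto simp: doubleton_eq_iff)
  ultimately show ?thesis
    unfolding spread_def e using p(1) e_new[unfolded e]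
    by (intro CollectI exI[of _ p] exI[of _ xo] exI[of _ xw]) simp
qed

lemma even_single_top_impossible:
  assumes "(r, 2 * q + 2) \<in> S" and single: "\<And>x y. (r, x) \<in> S \<Longrightarrow> (r, y) \<in> S \<Longrightarrow> x = y"
  shows False
proof -
  have "card {(r, 2 * q + 2), w} \<le> 2" by (simp add: card_insert_le_m1)
  then have "card {(r, 2 * q + 2), w} \<le> r" using r by simp
  then obtain y1 where y1: "y1 \<in> S" "y1 \<notin> {(r, 2 * q + 2), w}"
    using S_not_subset[of "{(r, 2 * q + 2), w}"] by auto
  have "card {(r, 2 * q + 2), w, y1} \<le> 3" by (simp add: card_insert_le_m1)
  then have "card {(r, 2 * q + 2), w, y1} \<le> r" using r by simp
  then obtain y2 where y2: "y2 \<in> S" "y2 \<notin> {(r, 2 * q + 2), w, y1}"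
    using S_not_subset[of "{(r, 2 * q + 2), w, y1}"] by auto
  text \<open>Both \<open>S - {y1}\<close> and \<open>S - {y2}\<close> would be the middle edge of gadget \<open>q\<close>.\<close>
  have "S - {u} = insert (r, 2 * q + 2) (link q)" if "u \<in> S" "u \<notin> {(r, 2 * q + 2), w}" for u
    using even_top_in_glued[of "S - {u}" q] S_minus_in_glued[of u] that assms by blast
  then have "S - {y1} = S - {y2}" using y1 y2 by auto
  then show False using y1 y2 by auto
qed

lemma S_in_one_copy:
  assumes single: "\<And>x y. (r, x) \<in> S \<Longrightarrow> (r, y) \<in> S \<Longrightarrow> x = y"
    and odd: "\<And>q. (r, 2 * q + 2) \<notin> S"
  obtains p where "p \<le> L" and "S \<subseteq> Alow \<union> {(r, 2 * p + 1)}"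
proof (cases "\<exists>x. (r, x) \<in> S")
  case True
  then obtain x where x: "(r, x) \<in> S" by blast
  then have "1 \<le> x" "x \<le> 4 * k - 3" using S_subset_V by (auto simp: V_iff)
  moreover have "odd x"
  proof
    assume "even x"
    then have "x = 2 * (x div 2 - 1) + 2" using \<open>1 \<le> x\<close> by presburger
    then show False using odd x by metis
  qed
  ultimately have "x = 2 * (x div 2) + 1" "x div 2 \<le> L" by (auto simp: L_def)
  moreover have "S \<subseteq> Alow \<union> {(r, x)}"
  proof
    fix u assume u: "u \<in> S"
    show "u \<in> Alow \<union> {(r, x)}"
    proof (cases "fst u = r")
      case True
      then have "(r, snd u) \<in> S" using u by (metis prod.collapse)
      then show ?thesis using single[OF _ x] True by (metis UnI2 prod.collapse singletonI)
    qed (use u S_subset_V in_V_below_top in blast)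
  qed
  ultimately show ?thesis using that[of "x div 2"] by simp
next
  case False
  have "S \<subseteq> Alow"
  proof
    fix u assume u: "u \<in> S"
    then have "fst u \<noteq> r" using False by (metis prod.collapse)
    then show "u \<in> Alow" using u S_subset_V in_V_below_top by blast
  qed
  then show ?thesis using that[of 0] by (auto simp: L_def)
qed

lemma single_odd_top_new_seed:
  assumes single: "\<And>x y. (r, x) \<in> S \<Longrightarrow> (r, y) \<in> S \<Longrightarrow> x = y"
    and odd: "\<And>q. (r, 2 * q + 2) \<notin> S"
  shows "\<exists>p\<le>L. e \<in> copy (2 * p + 1) ` new_seed (R p)"
proof -
  obtain p where p: "p \<le> L" and Sp: "S \<subseteq> Alow \<union> {(r, 2 * p + 1)}"
    using S_in_one_copy[OF single odd] by blast
  let ?m = "2 * p + 1"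
  have e: "e \<subseteq> Alow \<union> {(r, ?m)}" "w \<in> Alow \<union> {(r, ?m)}"
    using Sp unfolding S_def by auto
  define g where "g = to_seed ?m ` e"
  have g: "g \<subseteq> Vseed" "copy ?m g = e" using to_seed_subset[OF e(1)] copy_to_seed[OF e(1)] g_def by auto
  have v: "to_seed ?m w \<in> Vseed" "to_copy ?m (to_seed ?m w) = w"
    using to_seed_subset[of "{w}" ?m] to_copy_to_seed[OF e(2)] e(2) by auto
  have "completes r Vseed (R p) (to_seed ?m w) g"
    using completes_copy_iff[OF p g(1) v(1)] completes g(2) v(2) by simp
  moreover have "g \<notin> R p" using copy_in_glued_iff[OF p g(1)] e_new g(2) by simp
  ultimately have "g \<in> new_seed (R p)" unfolding new_seed_def using new_in_boot_step_iff by blast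
  then show ?thesis using g(2) p by blast
qed

lemma new_glued_cases: "e \<in> (\<Union>p\<le>L. copy (2 * p + 1) ` new_seed (R p)) \<union> spread (glued R M)"
proof (cases "\<exists>x y. (r, x) \<in> S \<and> (r, y) \<in> S \<and> x \<noteq> y")
  case True
  then show ?thesis using two_tops_spread by blast
next
  case False
  then have single: "\<And>x y. (r, x) \<in> S \<Longrightarrow> (r, y) \<in> S \<Longrightarrow> x = y" by blast
  then have "\<And>q. (r, 2 * q + 2) \<notin> S" using even_single_top_impossible by blast
  then show ?thesis using single_odd_top_new_seed[OF single] by blast
qed

end

context glued_states
begin

lemma copy_new_seed_in_new:
  assumes p: "p \<le> L" and g: "g \<in> new_seed (R p)"
  shows "copy (2 * p + 1) g \<in> new (glued R M)"
proof -
  obtain w where c: "completes r Vseed (R p) w g" and gR: "g \<notin> R p"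
    using g new_in_boot_step_iff[of g r Vseed "R p"] unfolding new_seed_def by blast
  then have gV: "g \<subseteq> Vseed" and wV: "w \<in> Vseed" by (auto simp: completes_def)
  have "completes r V (glued R M) (to_copy (2 * p + 1) w) (copy (2 * p + 1) g)"
    using completes_copy_iff[OF p gV wV] c by blast
  moreover have "copy (2 * p + 1) g \<notin> glued R M" using copy_in_glued_iff[OF p gV] gR by blast
  ultimately show ?thesis unfolding new_def using new_in_boot_step_iff by blast
qed

lemma spread_in_new:
  assumes "e \<in> spread (glued R M)"
  shows "e \<in> new (glued R M)"
proof -
  obtain p x y where p: "p < L" and x: "x \<in> {2 * p + 1, 2 * p + 2, 2 * p + 3}"
    and y: "y \<in> {2 * p + 1, 2 * p + 2, 2 * p + 3}" and xy: "y = Suc x \<or> x = Suc y"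
    and nb: "insert (r, y) (link p) \<in> glued R M" and e_new: "insert (r, x) (link p) \<notin> glued R M"
    and e: "e = insert (r, x) (link p)"
    using assms unfolding spread_def by blast
  have tops: "(r, x) \<in> V" "(r, y) \<in> V" using gadget_tops_in_V[OF p] x y by blast+
  have fin: "finite (insert (r, x) (link p))" using finite_link by simp
  text \<open>Every other \<open>r\<close>-subset of \<open>link p + v\<^sup>r\<^sub>x + v\<^sup>r\<^sub>y\<close> is the neighbouring edge or a
    gadget edge.\<close>
  have "completes r V (glued R M) (r, y) e"
    unfolding completes_def e
  proof (intro conjI allI impI)
    show "insert (r, x) (link p) \<subseteq> V" using tops link_subset_Alow Alow_subset_V by blast
    show "card (insert (r, x) (link p)) = r" by (rule card_insert_link)
    show "(r, y) \<in> V - insert (r, x) (link p)" using tops xy by auto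
    fix f assume "f \<subseteq> insert (r, y) (insert (r, x) (link p)) \<and> card f = r \<and> f \<noteq> insert (r, x) (link p)"
    then have f: "f \<subseteq> insert (r, y) (insert (r, x) (link p))" and card_f: "card f = r"
      and f_ne: "f \<noteq> insert (r, x) (link p)" by blast+
    show "f \<in> glued R M"
    proof (cases "(r, y) \<in> f")
      case False
      then have "f \<subseteq> insert (r, x) (link p)" using f by blast
      then have "f = insert (r, x) (link p)" using card_subset_eq[OF fin] card_f card_insert_link by metis
      then show ?thesis using f_ne by contradiction
    next
      case yf: True
      show ?thesis
      proof (cases "(r, x) \<in> f")
        case False
        then have "f \<subseteq> insert (r, y) (link p)" using f by blast
        moreover have "finite (insert (r, y) (link p))" using finite_link by simp
        ultimately have "f = insert (r, y) (link p)"
          using card_subset_eq card_f card_insert_link by metis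
        then show ?thesis using nb by simp
      next
        case True
        then have "f \<in> gadget_at p" using edge_with_adjacent_tops_in_gadget_at x y xy f yf card_f by blast
        then show ?thesis using gadget_at_subset_glued p by blast
      qed
    qed
  qed
  then show ?thesis unfolding new_def using new_in_boot_step_iff e e_new by blast
qed

theorem new_glued: "new (glued R M) = (\<Union>p\<le>L. copy (2 * p + 1) ` new_seed (R p)) \<union> spread (glued R M)"
proof
  show "new (glued R M) \<subseteq> (\<Union>p\<le>L. copy (2 * p + 1) ` new_seed (R p)) \<union> spread (glued R M)"
  proof
    fix e assume "e \<in> new (glued R M)"
    then obtain w where "completes r V (glued R M) w e" "e \<notin> glued R M"
      using new_in_boot_step_iff[of e r V "glued R M"] unfolding new_def by blast
    then interpret glued_completion r k T1 H1 es R M e w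
      by unfold_locales
    show "e \<in> (\<Union>p\<le>L. copy (2 * p + 1) ` new_seed (R p)) \<union> spread (glued R M)"
      by (rule new_glued_cases)
  qed
qed (use copy_new_seed_in_new spread_in_new in blast)

lemma left_edge_in_glued_iff:
  "p < L \<Longrightarrow> insert (r, 2 * p + 1) (link p) \<in> glued R M \<longleftrightarrow> run p T1 \<in> R p"
  using copy_in_glued_iff[of p "run p T1"] run_edges[of T1 p] copy_run_end[of "2 * p + 1" p] by simp

lemma right_edge_in_glued_iff:
  "p < L \<Longrightarrow> insert (r, 2 * p + 3) (link p) \<in> glued R M \<longleftrightarrow> run (Suc p) 0 \<in> R (Suc p)"
  using copy_in_glued_iff[of "Suc p" "run (Suc p) 0"] run_edges[of 0 "Suc p"] copy_run_start[of p]
  by simp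

lemma middle_edge_in_glued_iff: "insert (r, 2 * p + 2) (link p) \<in> glued R M \<longleftrightarrow> p \<in> M"
  using even_top_in_glued[of "insert (r, 2 * p + 2) (link p)" p] middle_in_glued by auto

text \<open>Along a gadget, infection moves from the left edge to the middle edge and from there to the
  right edge; the last two hypotheses say that each of these edges is present only if its left
  neighbour is.\<close>

lemma spread_eq:
  assumes left: "\<And>p. p < L \<Longrightarrow> run p T1 \<in> R p \<longleftrightarrow> P1 p"
    and middle: "\<And>p. p < L \<Longrightarrow> p \<in> M \<longleftrightarrow> P2 p"
    and right: "\<And>p. p < L \<Longrightarrow> run (Suc p) 0 \<in> R (Suc p) \<longleftrightarrow> P3 p"
    and mono: "\<And>p. p < L \<Longrightarrow> P2 p \<Longrightarrow> P1 p" "\<And>p. p < L \<Longrightarrow> P3 p \<Longrightarrow> P2 p"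
  shows "spread (glued R M) = {insert (r, 2 * p + 2) (link p) | p. p < L \<and> P1 p \<and> \<not> P2 p}
    \<union> {insert (r, 2 * p + 3) (link p) | p. p < L \<and> P2 p \<and> \<not> P3 p}"
proof -
  have edge: "insert (r, x) (link p) \<in> glued R M \<longleftrightarrow>
      (if x = 2 * p + 1 then P1 p else if x = 2 * p + 2 then P2 p else P3 p)"
    if "p < L" "x \<in> {2 * p + 1, 2 * p + 2, 2 * p + 3}" for p x
    using that left_edge_in_glued_iff[of p] middle_edge_in_glued_iff[of p] right_edge_in_glued_iff[of p]
      left[of p] middle[of p] right[of p] by auto
  show ?thesis
  proof (intro equalityI subsetI)
    fix e assume "e \<in> spread (glued R M)"
    then obtain p x y where p: "p < L" and x: "x \<in> {2 * p + 1, 2 * p + 2, 2 * p + 3}"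
      and y: "y \<in> {2 * p + 1, 2 * p + 2, 2 * p + 3}" and xy: "y = Suc x \<or> x = Suc y"
      and nb: "insert (r, y) (link p) \<in> glued R M" and e_new: "insert (r, x) (link p) \<notin> glued R M"
      and e: "e = insert (r, x) (link p)"
      unfolding spread_def by blast
    have "x = 2 * p + 2 \<and> P1 p \<and> \<not> P2 p \<or> x = 2 * p + 3 \<and> P2 p \<and> \<not> P3 p"
      using edge[OF p x] edge[OF p y] e_new nb x y xy mono[OF p] by auto
    then show "e \<in> {insert (r, 2 * p + 2) (link p) | p. p < L \<and> P1 p \<and> \<not> P2 p}
      \<union> {insert (r, 2 * p + 3) (link p) | p. p < L \<and> P2 p \<and> \<not> P3 p}"
      using e p by auto
  next
    fix e assume "e \<in> {insert (r, 2 * p + 2) (link p) | p. p < L \<and> P1 p \<and> \<not> P2 p}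
      \<union> {insert (r, 2 * p + 3) (link p) | p. p < L \<and> P2 p \<and> \<not> P3 p}"
    then obtain p x where "p < L" "e = insert (r, x) (link p)"
      "x = 2 * p + 2 \<and> P1 p \<and> \<not> P2 p \<or> x = 2 * p + 3 \<and> P2 p \<and> \<not> P3 p"
      by blast
    then show "e \<in> spread (glued R M)"
      unfolding spread_def using edge[of p "x - 1"] edge[of p x]
      by (intro CollectI exI[of _ p] exI[of _ x] exI[of _ "x - 1"]) auto
  qed
qed

end

section \<open>The forward process\<close>

context seed
begin

definition run_state :: "(nat \<Rightarrow> vert set) \<Rightarrow> nat \<Rightarrow> vert set set" where
  "run_state c s = B \<union> c ` {0..s}"

text \<open>At stage \<open>(q, s)\<close> with \<open>s \<le> T1 + 1\<close>, the copies before \<open>q\<close> have completed their runs and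
  copy \<open>q\<close> has made \<open>s\<close> steps of its own; \<open>s = T1 + 1\<close> means that also the middle edge of
  gadget \<open>q\<close> is infected.\<close>

definition copy_state :: "nat \<Rightarrow> nat \<Rightarrow> nat \<Rightarrow> vert set set" where
  "copy_state q s p =
  (if p < q then run_state (run p) T1 else if p = q then run_state (run p) (min T1 s) else B)"
definition middles :: "nat \<Rightarrow> nat \<Rightarrow> nat set" where
  "middles q s = {p. p < L \<and> (p < q \<or> p = q \<and> T1 < s)}"
definition stage :: "nat \<Rightarrow> nat \<Rightarrow> vert set set" where
  "stage q s = glued (copy_state q s) (middles q s)"
definition stage_edge :: "nat \<Rightarrow> nat \<Rightarrow> vert set" where
  "stage_edge q s =
  (if s \<le> T1 then copy (2 * q + 1) (run q s) else insert (r, 2 * q + 2) (link q))"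

lemma run_sequential_run: "sequential_run r Vseed B T1 (run p)"
  using forward backward unfolding Vseed_eq B_def run_def by simp

lemma new_seed_run_state: "s < T1 \<Longrightarrow> new_seed (run_state (run p) s) = {run p (Suc s)}"
  using run_sequential_run[of p] unfolding sequential_run_def new_seed_def run_state_def by blast

lemma new_seed_run_state_end: "new_seed (run_state (run p) T1) = {}"
  using run_sequential_run[of p]
  unfolding sequential_run_def stationary_def new_seed_def run_state_def by blast

lemma new_seed_B: "new_seed B = {}"
  using base_stationary unfolding stationary_def new_seed_def Vseed_eq B_def by simp

lemma run_start_notin_B: "run p 0 \<notin> B"
  using run_sequential_run[of p] unfolding sequential_run_def by blast

lemma run_end_notin_B: "run p T1 \<notin> B"
  using run_start_notin_B[of "Suc p"] run_Suc_0 by simp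

lemma run_state_mono: "s \<le> s' \<Longrightarrow> run_state c s \<subseteq> run_state c s'"
  unfolding run_state_def by (intro Un_mono order_refl image_mono) auto

lemma run_state_Suc: "run_state c (Suc s) = insert (c (Suc s)) (run_state c s)"
  unfolding run_state_def by (auto simp: atLeastAtMostSuc_conv)

lemma run_end_in_run_state_iff: "s \<le> T1 \<Longrightarrow> run p T1 \<in> run_state (run p) s \<longleftrightarrow> s = T1"
proof
  assume s: "s \<le> T1" and end_in: "run p T1 \<in> run_state (run p) s"
  show "s = T1"
  proof (rule ccontr)
    assume "s \<noteq> T1"
    then have "s \<le> T1 - 1" using s by simp
    then have "run p T1 \<in> run_state (run p) (T1 - 1)" using end_in run_state_mono by blast
    moreover have "run p T1 \<in> new_seed (run_state (run p) (T1 - 1))"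
      using new_seed_run_state[of "T1 - 1" p] T1 by simp
    ultimately show False unfolding new_seed_def by blast
  qed
qed (simp add: run_state_def)

lemma stage_glued_states: "glued_states r k T1 H1 es (copy_state q s) (middles q s)"
proof (intro glued_states.intro seed_axioms glued_states_axioms.intro)
  fix p assume "p \<le> L"
  then show "B \<subseteq> copy_state q s p" by (auto simp: copy_state_def run_state_def)
next
  fix p g assume "g \<in> copy_state q s p"
  then have "g \<in> B \<or> (\<exists>i\<le>T1. g = run p i)"
    by (auto simp: copy_state_def run_state_def split: if_splits)
  then show "g \<subseteq> Vseed \<and> card g = r" and "(r, 1) \<notin> g \<Longrightarrow> g \<in> B"
    using B_edges run_edges by blast+
qed (auto simp: middles_def)

lemma new_seed_copy_state:
  "new_seed (copy_state q s p) = (if p = q \<and> s < T1 then {run q (Suc s)} else {})"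
proof (cases "p = q")
  case True
  then show ?thesis
    using new_seed_run_state[of s q] new_seed_run_state_end[of q] by (simp add: copy_state_def min_def)
qed (simp add: copy_state_def new_seed_run_state_end new_seed_B)

lemma new_stage: "new (stage q s) =
  (if q \<le> L \<and> s < T1 then {copy (2 * q + 1) (run q (Suc s))} else {})
  \<union> (if q < L \<and> s = T1 then {insert (r, 2 * q + 2) (link q)} else {})
  \<union> (if q < L \<and> T1 < s then {insert (r, 2 * q + 3) (link q)} else {})"
proof -
  interpret glued_states r k T1 H1 es "copy_state q s" "middles q s" by (rule stage_glued_states)
  have copies: "(\<Union>p\<le>L. copy (2 * p + 1) ` new_seed (copy_state q s p)) =
      (if q \<le> L \<and> s < T1 then {copy (2 * q + 1) (run q (Suc s))} else {})"
    unfolding new_seed_copy_state by (auto split: if_splits)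
  have "spread (stage q s) =
      {insert (r, 2 * p + 2) (link p) | p. p < L \<and> (p < q \<or> p = q \<and> T1 \<le> s) \<and> \<not> (p < q \<or> p = q \<and> T1 < s)}
    \<union> {insert (r, 2 * p + 3) (link p) | p. p < L \<and> (p < q \<or> p = q \<and> T1 < s) \<and> \<not> Suc p \<le> q}"
    unfolding stage_def
  proof (rule spread_eq)
    fix p assume "p < L"
    show "run p T1 \<in> copy_state q s p \<longleftrightarrow> p < q \<or> p = q \<and> T1 \<le> s"
      using run_end_in_run_state_iff[of T1 p] run_end_in_run_state_iff[of "min T1 s" p] run_end_notin_B[of p]
      by (auto simp: copy_state_def min_def)
    show "p \<in> middles q s \<longleftrightarrow> p < q \<or> p = q \<and> T1 < s" using \<open>p < L\<close> by (simp add: middles_def)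
    show "run (Suc p) 0 \<in> copy_state q s (Suc p) \<longleftrightarrow> Suc p \<le> q"
      using run_start_notin_B by (auto simp: copy_state_def run_state_def)
  qed auto
  also have "\<dots> = (if q < L \<and> s = T1 then {insert (r, 2 * q + 2) (link q)} else {})
    \<union> (if q < L \<and> T1 < s then {insert (r, 2 * q + 3) (link q)} else {})"
    by auto
  finally show ?thesis using new_glued copies unfolding stage_def by simp
qed

lemma glued_insert_copy:
  assumes "p \<le> L"
  shows "glued (R(p := insert g (R p))) M = insert (copy (2 * p + 1) g) (glued R M)"
proof -
  have union: "(\<Union>p'\<in>A. if p' = p then insert c (F p') else F p') = insert c (\<Union>p'\<in>A. F p')"
    if "p \<in> A" for A c and F :: "nat \<Rightarrow> vert set set"
    using that by auto
  have "(\<Union>p'\<le>L. copy (2 * p' + 1) ` (R(p := insert g (R p))) p')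
      = (\<Union>p'\<le>L. if p' = p then insert (copy (2 * p + 1) g) (copy (2 * p' + 1) ` R p')
          else copy (2 * p' + 1) ` R p')"
    by (intro SUP_cong) auto
  also have "\<dots> = insert (copy (2 * p + 1) g) (\<Union>p'\<le>L. copy (2 * p' + 1) ` R p')"
    by (rule union[of "{..L}" "copy (2 * p + 1) g" "\<lambda>p'. copy (2 * p' + 1) ` R p'"]) (simp add: assms)
  finally have copies: "(\<Union>p'\<le>L. copy (2 * p' + 1) ` (R(p := insert g (R p))) p')
    = insert (copy (2 * p + 1) g) (\<Union>p'\<le>L. copy (2 * p' + 1) ` R p')" .
  show ?thesis unfolding glued_def copies by blast
qed

lemma glued_insert_middle: "glued R (insert p M) = insert (insert (r, 2 * p + 2) (link p)) (glued R M)"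
  unfolding glued_def by auto

lemma stage_Suc:
  assumes "q \<le> L" "s < T1"
  shows "stage q (Suc s) = insert (copy (2 * q + 1) (run q (Suc s))) (stage q s)"
proof -
  have "min T1 (Suc s) = Suc s" "min T1 s = s" using assms(2) by auto
  then have "run_state (run q) (min T1 (Suc s)) = insert (run q (Suc s)) (run_state (run q) (min T1 s))"
    by (simp add: run_state_Suc)
  then have "copy_state q (Suc s) = (copy_state q s)(q := insert (run q (Suc s)) (copy_state q s q))"
    by (simp add: copy_state_def fun_eq_iff)
  moreover have "middles q (Suc s) = middles q s" using assms(2) by (auto simp: middles_def)
  ultimately show ?thesis unfolding stage_def using glued_insert_copy[OF assms(1)] by simp
qed

lemma stage_middle:
  assumes "q < L"
  shows "stage q (Suc T1) = insert (insert (r, 2 * q + 2) (link q)) (stage q T1)"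
proof -
  have "copy_state q (Suc T1) = copy_state q T1" by (simp add: copy_state_def fun_eq_iff)
  moreover have "middles q (Suc T1) = insert q (middles q T1)" using assms by (auto simp: middles_def)
  ultimately show ?thesis unfolding stage_def by (simp only: glued_insert_middle)
qed

lemma stage_next_copy:
  assumes "q < L"
  shows "stage (Suc q) 0 = insert (insert (r, 2 * q + 3) (link q)) (stage q (Suc T1))"
proof -
  have "copy_state (Suc q) 0 =
      (copy_state q (Suc T1))(Suc q := insert (run (Suc q) 0) (copy_state q (Suc T1) (Suc q)))"
    by (auto simp: copy_state_def run_state_def fun_eq_iff)
  moreover have "middles (Suc q) 0 = middles q (Suc T1)" by (auto simp: middles_def)
  ultimately show ?thesis
    unfolding stage_def using glued_insert_copy[of "Suc q"] assms copy_run_start by simp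
qed

text \<open>Time \<open>t\<close> of the glued process is stage \<open>(t div (T1 + 2), t mod (T1 + 2))\<close>: each copy
  runs for \<open>T1\<close> steps and each gadget takes two more.\<close>

definition period :: nat where "period = T1 + 2"
definition state_at :: "nat \<Rightarrow> vert set set" where "state_at t = stage (t div period) (t mod period)"
definition ext :: "nat \<Rightarrow> vert set" where "ext t = stage_edge (t div period) (t mod period)"
definition Tend :: nat where "Tend = L * period + T1"

lemma Tend_div: "Tend div period = L" and Tend_mod: "Tend mod period = T1"
  using divmod_eq[of Tend L period T1] by (simp_all add: Tend_def period_def)

lemma less_Tend_cases:
  assumes "t < Tend"
  shows "t div period < L \<or> t div period = L \<and> t mod period < T1"
proof (rule lex_less)
  show "t div period * period + t mod period < L * period + T1"
    using assms unfolding Tend_def by simp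
qed (simp_all add: period_def)

lemma state_at_step:
  assumes "t < Tend"
  shows "new (state_at t) = {ext (Suc t)} \<and> state_at (Suc t) = insert (ext (Suc t)) (state_at t)"
proof -
  define q where "q = t div period"
  define s where "s = t mod period"
  have qs: "q < L \<or> q = L \<and> s < T1" using less_Tend_cases[OF assms] q_def s_def by simp
  have state: "state_at t = stage q s" "ext (Suc t) = stage_edge (Suc t div period) (Suc t mod period)"
    "state_at (Suc t) = stage (Suc t div period) (Suc t mod period)"
    unfolding state_at_def ext_def q_def s_def by simp_all
  have "s < Suc (Suc T1)" unfolding s_def period_def by simp
  then consider "s < T1" | "s = T1" | "s = Suc T1" by linarith
  then show ?thesis
  proof cases
    case 1
    then have "Suc t div period = q" "Suc t mod period = Suc s"
      unfolding q_def s_def period_def by (simp_all add: div_Suc mod_Suc)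
    moreover have "q \<le> L" using qs by auto
    ultimately show ?thesis
      using 1 state new_stage[of q s] stage_Suc[of q s] by (simp add: stage_edge_def)
  next
    case 2
    then have "Suc t div period = q" "Suc t mod period = Suc T1"
      unfolding q_def s_def period_def by (simp_all add: div_Suc mod_Suc)
    moreover have "q < L" using qs 2 by auto
    ultimately show ?thesis
      using 2 state new_stage[of q s] stage_middle[of q] by (simp add: stage_edge_def)
  next
    case 3
    then have "Suc t div period = Suc q" "Suc t mod period = 0"
      unfolding q_def s_def period_def by (simp_all add: div_Suc mod_Suc)
    moreover have "q < L" using qs 3 by auto
    ultimately show ?thesis
      using 3 state new_stage[of q s] stage_next_copy[of q] copy_run_start[of q]
      by (simp add: stage_edge_def)
  qed
qed

lemma new_state_at_Tend: "new (state_at Tend) = {}"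
  unfolding state_at_def Tend_div Tend_mod new_stage by simp

lemma boot_stage: "t \<le> Tend \<Longrightarrow> boot r V (stage 0 0) t = state_at t"
  using boot_one_by_one[of Tend r V state_at ext] state_at_step unfolding new_def
  by (simp add: state_at_def)

lemma forward_steps:
  assumes "1 \<le> i" "i \<le> Tend"
  shows "boot r V (stage 0 0) i - boot r V (stage 0 0) (i - 1) = {ext i}"
proof -
  have "new (state_at (i - 1)) = {ext i}" "state_at i = insert (ext i) (state_at (i - 1))"
    using state_at_step[of "i - 1"] assms by simp_all
  then show ?thesis using boot_stage[of i] boot_stage[of "i - 1"] assms unfolding new_def by auto
qed

lemma forward_stops: "boot r V (stage 0 0) (Suc Tend) = boot r V (stage 0 0) Tend"
  using new_state_at_Tend boot_stage[of Tend] subset_boot_step[of "state_at Tend" r V]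
  unfolding new_def by (simp add: boot_Suc)

lemma new_glued_base: "new (glued (\<lambda>_. B) {}) = {}"
proof -
  interpret glued_states r k T1 H1 es "\<lambda>_. B" "{}"
    by (intro glued_states.intro seed_axioms glued_states_axioms.intro) (auto simp: B_edges B_def)
  have "spread (glued (\<lambda>_. B) {}) = {insert (r, 2 * p + 2) (link p) | p. p < L \<and> False \<and> \<not> False}
    \<union> {insert (r, 2 * p + 3) (link p) | p. p < L \<and> False \<and> \<not> False}"
    by (rule spread_eq) (use run_end_notin_B run_start_notin_B in auto)
  then show ?thesis unfolding new_glued using new_seed_B by simp
qed

lemma stage_0_0: "stage 0 0 = Gadgets \<union> H1 \<union> (\<Union>p\<in>{1..L}. copy (2 * p + 1) ` B)"
proof -
  have "copy_state 0 0 = (\<lambda>p. if p = 0 then H1 else B)"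
    using es_0 by (auto simp: copy_state_def run_state_def run_def B_def fun_eq_iff)
  moreover have "(\<Union>p\<in>{1..L}. copy (2 * p + 1) ` (if p = 0 then H1 else B)) =
      (\<Union>p\<in>{1..L}. copy (2 * p + 1) ` B)"
    by (intro SUP_cong) auto
  ultimately show ?thesis
    unfolding stage_def glued_def middles_def UN_atMost_split[of "\<lambda>p. copy (2 * p + 1) ` _ p"]
    by (simp add: Un_assoc)
qed

lemma es_0_notin_copy: "1 \<le> p \<Longrightarrow> g \<subseteq> Vseed \<Longrightarrow> es 0 \<noteq> copy (2 * p + 1) g"
  using es_edges[of 0] top_in_copy[of g 1 "2 * p + 1"] by auto

lemma es_0_notin_Gadgets: "es 0 \<notin> Gadgets"
proof
  assume "es 0 \<in> Gadgets"
  then obtain p where "es 0 \<in> gadget_at p" unfolding Gadgets_def by blast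
  then have "(r, 2 * p + 2) \<in> es 0" using gadget_at_edgeD(3) by blast
  moreover have "es 0 \<subseteq> Vseed" using es_edges[of 0] by (simp add: Vseed_eq)
  ultimately have "(r, 2 * p + 2) \<in> Vseed" by blast
  then show False by (simp add: Vseed_def)
qed

lemma stage_0_0_minus_first: "stage 0 0 - {es 0} = glued (\<lambda>_. B) {}"
proof -
  have "es 0 \<notin> (\<Union>p\<in>{1..L}. copy (2 * p + 1) ` B)"
  proof
    assume "es 0 \<in> (\<Union>p\<in>{1..L}. copy (2 * p + 1) ` B)"
    then obtain p g where "1 \<le> p" "g \<in> B" "es 0 = copy (2 * p + 1) g" by auto
    then show False using es_0_notin_copy B_edges by blast
  qed
  then have "stage 0 0 - {es 0} = Gadgets \<union> B \<union> (\<Union>p\<in>{1..L}. copy (2 * p + 1) ` B)"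
    unfolding stage_0_0 Un_Diff B_def using es_0_notin_Gadgets by simp
  also have "\<dots> = glued (\<lambda>_. B) {}"
    unfolding glued_def UN_atMost_split[of "\<lambda>p. copy (2 * p + 1) ` B"] by auto
  finally show ?thesis .
qed

lemma stage_0_0_minus_first_stationary: "stationary r V (stage 0 0 - {es 0})"
  using new_glued_base subset_boot_step[of "glued (\<lambda>_. B) {}" r V]
  unfolding stationary_def stage_0_0_minus_first new_def by blast

lemma stage_edges: "f \<in> stage q s \<Longrightarrow> f \<subseteq> V \<and> card f = r"
  using glued_states.glued_edges[OF stage_glued_states] unfolding stage_def by blast

lemma ext_init: "i \<le> T1 \<Longrightarrow> ext i = es i"
proof -
  assume "i \<le> T1"
  then have "i div period = 0" "i mod period = i" by (simp_all add: period_def)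
  then show ?thesis using \<open>i \<le> T1\<close> by (simp add: ext_def stage_edge_def run_def)
qed

lemma ext_Tend: "ext Tend = copy (2 * L + 1) (es T1)"
proof -
  have "even L" by (simp add: L_def)
  then show ?thesis by (simp add: ext_def Tend_div Tend_mod stage_edge_def run_def)
qed

lemma ext_edges:
  assumes "i \<le> Tend"
  shows "ext i \<subseteq> V \<and> card (ext i) = r"
proof (cases "i = 0")
  case True
  have "Vseed \<subseteq> V" using Alow_subset_V top_in_V[of 1] k by (auto simp: Vseed_def)
  then show ?thesis using True ext_init[of 0] es_edges[of 0] by (auto simp: Vseed_eq)
next
  case False
  then have "ext i \<in> boot r V (stage 0 0) i" using forward_steps[of i] assms by auto
  then show ?thesis using boot_stage[OF assms] stage_edges unfolding state_at_def by simp
qed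

end

section \<open>The backward process\<close>

context seed
begin

lemma es_end_notin_B: "es T1 \<notin> B"
  using run_start_notin_B[of 1] by (simp add: run_def)

lemma seed_reverse: "seed r k T1 (B \<union> {es T1}) (\<lambda>i. es (T1 - i))"
proof -
  have base: "B \<union> {es T1} - {es (T1 - 0)} = B" using es_end_notin_B by auto
  show ?thesis
  proof (unfold_locales, unfold base)
    show "3 \<le> r" "2 \<le> k" "1 \<le> T1" using r k T1 by auto
    show "f \<subseteq> Astar k (r - 1) \<union> {(r, 1)} \<and> card f = r" if "f \<in> B \<union> {es T1}" for f
      using that B_edges es_edges[of T1] by (auto simp: Vseed_eq)
    show "es (T1 - i) \<subseteq> Astar k (r - 1) \<union> {(r, 1)} \<and> card (es (T1 - i)) = r \<and> (r, 1) \<in> es (T1 - i)"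
      for i using es_edges[of "T1 - i"] by simp
    show "es (T1 - 0) \<in> B \<union> {es T1}" by simp
    show "stationary r (Astar k (r - 1) \<union> {(r, 1)}) B"
      using base_stationary by (simp add: B_def)
    show "sequential_run r (Astar k (r - 1) \<union> {(r, 1)}) B T1 (\<lambda>i. es (T1 - i))"
      using backward by (simp add: B_def)
    show "sequential_run r (Astar k (r - 1) \<union> {(r, 1)}) B T1 (\<lambda>i. es (T1 - (T1 - i)))"
      using sequential_run_cong[OF _ forward, of "\<lambda>i. es (T1 - (T1 - i))"] by (simp add: B_def)
  qed
qed

end

text \<open>A \<open>sublocale seed \<subseteq> seed\<close> would unfold forever, so the reversed seed is attached
  to a copy of the locale.\<close>

locale seed_mirror = seed

sublocale seed_mirror \<subseteq> R: seed r k T1 "B \<union> {es T1}" "\<lambda>i. es (T1 - i)"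
  by (rule seed_reverse)

context seed_mirror
begin

text \<open>The reflection \<open>v\<^sup>r\<^sub>x \<mapsto> v\<^sup>r\<^sub>4\<^sub>k\<^sub>-\<^sub>2\<^sub>-\<^sub>x\<close> of the top layer maps the glued graph of the
  reversed seed onto that of the seed, reversing the order of copies and gadgets.\<close>

definition mirror :: "vert \<Rightarrow> vert" where
  "mirror u = (if fst u = r then (r, 4 * k - 2 - snd u) else u)"

lemma mirror_top: "mirror (r, x) = (r, 4 * k - 2 - x)"
  by (simp add: mirror_def)

lemma mirror_Alow: "D \<subseteq> Alow \<Longrightarrow> mirror ` D = D"
  by (force simp: mirror_def Alow_iff image_iff)

lemma mirror_bij: "bij_betw mirror V V"
proof -
  have "mirror u \<in> V \<and> mirror (mirror u) = u" if "u \<in> V" for u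
    using that k by (cases u) (auto simp: mirror_def V_iff)
  then show ?thesis by (intro bij_betw_byWitness[of V mirror mirror V]) auto
qed

lemma four_k_minus_two: "4 * k - 2 = 2 * L + 2"
  using k by (simp add: L_def)

lemma mirror_copy: "g \<subseteq> Vseed \<Longrightarrow> mirror ` copy m g = copy (4 * k - 2 - m) g"
proof -
  assume g: "g \<subseteq> Vseed"
  have "mirror (to_copy m u) = to_copy (4 * k - 2 - m) u" if "u \<in> g" for u
  proof (cases "u = (r, 1)")
    case False
    then have "u \<in> Alow" using that g by (auto simp: Vseed_def)
    then show ?thesis using False mirror_Alow[of "{u}"] by (simp add: to_copy_def)
  qed (simp add: to_copy_def mirror_top)
  then show ?thesis unfolding copy_def image_image by (rule image_cong[OF refl])
qed

lemma mirror_seed_edge: "g \<subseteq> Vseed \<Longrightarrow> mirror ` g = copy (2 * L + 1) g"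
  using mirror_copy[of g "Suc 0"] four_k_minus_two by simp

lemma R_link: "p < L \<Longrightarrow> R.link p = link (L - 1 - p)"
proof -
  assume p: "p < L"
  have "even (L - 1 - p) \<longleftrightarrow> odd p" using p by (simp add: L_def) presburger
  then show ?thesis by (simp add: R.link_def R.run_def link_def run_def)
qed

lemma R_B: "R.B = B"
proof -
  have "R.B = B \<union> {es T1} - {es (T1 - 0)}" by (rule R.B_def)
  then show ?thesis using es_end_notin_B by auto
qed

lemma mirror_gadget_at: "p < L \<Longrightarrow> (`) mirror ` R.gadget_at p = gadget_at (L - 1 - p)"
proof -
  assume p: "p < L"
  have tops: "(r, 2 * p + 1) \<in> V" "(r, 2 * p + 2) \<in> V" "(r, 2 * p + 3) \<in> V"
    using gadget_tops_in_V[OF p] by auto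
  have D: "R.link p \<subseteq> V" using R_link[OF p] link_subset_Alow Alow_subset_V by blast
  have "(`) mirror ` R.gadget_at p = gadget r (mirror (r, 2 * p + 1)) (mirror (r, 2 * p + 2))
      (mirror (r, 2 * p + 3)) (mirror ` R.link p)"
    unfolding R.gadget_at_def by (rule gadget_image[OF bij_betw_imp_inj_on[OF mirror_bij] tops D])
  also have "mirror ` R.link p = link (L - 1 - p)"
    using R_link[OF p] mirror_Alow[OF link_subset_Alow] by simp
  also have "mirror (r, 2 * p + 1) = (r, 2 * (L - 1 - p) + 3)" using p four_k_minus_two by (simp add: mirror_top)
  also have "mirror (r, 2 * p + 2) = (r, 2 * (L - 1 - p) + 2)" using p four_k_minus_two by (simp add: mirror_top)
  also have "mirror (r, 2 * p + 3) = (r, 2 * (L - 1 - p) + 1)" using p four_k_minus_two by (simp add: mirror_top)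
  finally show ?thesis unfolding gadget_at_def by (simp only: gadget_sym)
qed

lemma mirror_Gadgets: "(`) mirror ` R.Gadgets = Gadgets"
proof -
  have "(`) mirror ` R.Gadgets = (\<Union>p<L. (`) mirror ` R.gadget_at p)"
    unfolding R.Gadgets_def by (simp add: image_UN)
  also have "\<dots> = (\<Union>p<L. gadget_at (L - 1 - p))" using mirror_gadget_at by simp
  also have "\<dots> = Gadgets" unfolding Gadgets_def by (rule UN_reflect_less)
  finally show ?thesis .
qed

lemma mirror_copies:
  "(`) mirror ` (\<Union>p\<in>{1..L}. copy (2 * p + 1) ` B) = (\<Union>p<L. copy (2 * p + 1) ` B)"
proof -
  have "(`) mirror ` (\<Union>p\<in>{1..L}. copy (2 * p + 1) ` B) = (\<Union>p\<in>{1..L}. (\<lambda>g. mirror ` copy (2 * p + 1) g) ` B)"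
    by (simp add: image_UN image_image)
  also have "\<dots> = (\<Union>p\<in>{1..L}. copy (2 * (L - p) + 1) ` B)"
  proof (rule SUP_cong[OF refl])
    fix p assume p: "p \<in> {1..L}"
    then have "4 * k - 2 - (2 * p + 1) = 2 * (L - p) + 1" using four_k_minus_two by auto
    then show "(\<lambda>g. mirror ` copy (2 * p + 1) g) ` B = copy (2 * (L - p) + 1) ` B"
      using mirror_copy B_edges by (intro image_cong[OF refl]) simp
  qed
  also have "\<dots> = (\<Union>p<L. copy (2 * p + 1) ` B)"
    by (rule UN_reflect[of "\<lambda>q. copy (2 * q + 1) ` B"])
  finally show ?thesis .
qed

lemma mirror_reverse_start:
  "(`) mirror ` R.stage 0 0 = glued (\<lambda>_. B) {} \<union> {copy (2 * L + 1) (es T1)}"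
proof -
  let ?C = "\<lambda>p. copy (2 * p + 1) ` B"
  have "es T1 \<subseteq> Vseed" using es_edges[of T1] by (simp add: Vseed_eq)
  then have seed_edges: "(`) mirror ` B \<union> (`) mirror ` {es T1} = ?C L \<union> {copy (2 * L + 1) (es T1)}"
    using mirror_seed_edge B_edges by auto
  have start: "R.stage 0 0 = R.Gadgets \<union> (B \<union> {es T1}) \<union> (\<Union>p\<in>{1..L}. ?C p)"
    using R.stage_0_0 R_B by simp
  have "(`) mirror ` R.stage 0 0 = Gadgets \<union> (?C L \<union> {copy (2 * L + 1) (es T1)}) \<union> (\<Union>p<L. ?C p)"
    unfolding start image_Un mirror_Gadgets mirror_copies seed_edges ..
  also have "\<dots> = Gadgets \<union> (?C L \<union> (\<Union>p<L. ?C p)) \<union> {copy (2 * L + 1) (es T1)}"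
    by blast
  also have "?C L \<union> (\<Union>p<L. ?C p) = (\<Union>p\<le>L. ?C p)"
    by (simp add: lessThan_Suc_atMost[symmetric] lessThan_Suc)
  finally show ?thesis unfolding glued_def by simp
qed

lemma stage_swap_ends:
  "stage 0 0 \<union> {ext Tend} - {ext 0} = glued (\<lambda>_. B) {} \<union> {copy (2 * L + 1) (es T1)}"
proof -
  have "1 \<le> L" using k by (simp add: L_def)
  moreover have "es T1 \<subseteq> Vseed" using es_edges[of T1] by (simp add: Vseed_eq)
  ultimately have "copy (2 * L + 1) (es T1) \<noteq> es 0" using es_0_notin_copy by metis
  then have "stage 0 0 \<union> {ext Tend} - {ext 0} = (stage 0 0 - {es 0}) \<union> {copy (2 * L + 1) (es T1)}"
    using ext_init[of 0] ext_Tend by auto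
  then show ?thesis unfolding stage_0_0_minus_first .
qed

lemma mirror_run_edge:
  assumes "q \<le> L" "s \<le> T1"
  shows "mirror ` R.stage_edge q s = stage_edge (L - q) (T1 - s)"
proof -
  have "even L" by (simp add: L_def)
  then have "even (L - q) \<longleftrightarrow> even q" using assms(1) by presburger
  then have run: "R.run q s = run (L - q) (T1 - s)" using assms(2) by (simp add: R.run_def run_def)
  have "mirror ` R.stage_edge q s = mirror ` copy (2 * q + 1) (R.run q s)"
    using assms(2) by (simp add: R.stage_edge_def)
  also have "\<dots> = copy (4 * k - 2 - (2 * q + 1)) (R.run q s)"
    using mirror_copy R.run_edges[OF assms(2)] by simp
  also have "4 * k - 2 - (2 * q + 1) = 2 * (L - q) + 1" using four_k_minus_two assms(1) by simp
  finally show ?thesis unfolding run by (simp add: stage_edge_def)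
qed

lemma mirror_middle_edge:
  assumes "q < L"
  shows "mirror ` R.stage_edge q (Suc T1) = stage_edge (L - 1 - q) (Suc T1)"
proof -
  have "mirror ` R.stage_edge q (Suc T1) = mirror ` insert (r, 2 * q + 2) (R.link q)"
    by (simp add: R.stage_edge_def)
  also have "\<dots> = insert (r, 4 * k - 2 - (2 * q + 2)) (link (L - 1 - q))"
    using R_link[OF assms] mirror_Alow[OF link_subset_Alow] by (simp add: mirror_top)
  also have "4 * k - 2 - (2 * q + 2) = 2 * (L - 1 - q) + 2" using four_k_minus_two assms by simp
  finally show ?thesis by (simp add: stage_edge_def)
qed

lemma mirror_reverse_ext:
  assumes i: "i \<le> Tend"
  shows "mirror ` R.ext i = ext (Tend - i)"
proof -
  define q where "q = i div period"
  define s where "s = i mod period"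
  have iqs: "i = q * period + s" unfolding q_def s_def by simp
  have s_less: "s < Suc (Suc T1)" unfolding s_def period_def by simp
  have "q * period + s < L * period + Suc T1" using i iqs unfolding Tend_def by simp
  then have lex: "q < L \<or> q = L \<and> s < Suc T1"
    using lex_less[of s period q L "Suc T1"] s_less by (simp add: period_def)
  have ext_i: "R.ext i = R.stage_edge q s" unfolding R.ext_def q_def s_def by simp
  show ?thesis
  proof (cases "s \<le> T1")
    case True
    have qL: "q \<le> L" using lex by auto
    have "q * period \<le> L * period" using qL by (rule mult_le_mono1)
    moreover have "(L - q) * period = L * period - q * period" by (simp add: diff_mult_distrib)
    ultimately have "Tend - i = (L - q) * period + (T1 - s)" using iqs True unfolding Tend_def by simp
    moreover have "T1 - s < period" by (simp add: period_def)
    ultimately have "(Tend - i) div period = L - q" "(Tend - i) mod period = T1 - s"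
      using divmod_eq by blast+
    then show ?thesis unfolding ext_i ext_def mirror_run_edge[OF qL True] by simp
  next
    case False
    then have sT: "s = Suc T1" using s_less by simp
    have qL: "q < L" using lex False by auto
    have "Suc q * period \<le> L * period" using qL by (intro mult_le_mono1) simp
    moreover have "(L - 1 - q) * period = L * period - Suc q * period" by (simp add: diff_mult_distrib)
    ultimately have "Tend - i = (L - 1 - q) * period + Suc T1"
      using iqs sT unfolding Tend_def period_def by simp
    moreover have "Suc T1 < period" by (simp add: period_def)
    ultimately have "(Tend - i) div period = L - 1 - q" "(Tend - i) mod period = Suc T1"
      using divmod_eq by blast+
    then show ?thesis unfolding ext_i ext_def sT mirror_middle_edge[OF qL] by simp
  qed
qed

lemma backward_steps:
  assumes "1 \<le> i" "i \<le> Tend"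
  shows "boot r V (stage 0 0 \<union> {ext Tend} - {ext 0}) i
    - boot r V (stage 0 0 \<union> {ext Tend} - {ext 0}) (i - 1) = {ext (Tend - i)}"
proof -
  have start: "stage 0 0 \<union> {ext Tend} - {ext 0} = (`) mirror ` R.stage 0 0"
    unfolding stage_swap_ends mirror_reverse_start ..
  have edges: "\<forall>f\<in>R.stage 0 0. f \<subseteq> V" using R.stage_edges by simp
  note boot_mirror = boot_image[OF mirror_bij edges]
  have "boot r V (R.stage 0 0) i - boot r V (R.stage 0 0) (i - 1) = {R.ext i}"
    using R.forward_steps[OF assms] by simp
  then have "(`) mirror ` boot r V (R.stage 0 0) i - (`) mirror ` boot r V (R.stage 0 0) (i - 1)
      = {mirror ` R.ext i}"
    using image_edges_diff[OF bij_betw_imp_inj_on[OF mirror_bij] boot_mirror(2) boot_mirror(2)] by simp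
  then show ?thesis unfolding start boot_mirror(1) mirror_reverse_ext[OF assms(2)] .
qed

end

context seed
begin

lemma replace_vertex_eq_copies:
  "(\<Union>j\<in>{2..2 * k - 1}. replace_vertex (r, 1) (r, 2 * j - 1) (H1 - {es 0}))
    = (\<Union>p\<in>{1..L}. copy (2 * p + 1) ` B)"
proof -
  have replace: "replace_vertex (r, 1) (r, m) G = copy m ` G" for m G
    unfolding replace_vertex_def copy_def to_copy_def by simp
  show ?thesis
  proof (intro equalityI subsetI)
    fix x assume "x \<in> (\<Union>j\<in>{2..2 * k - 1}. replace_vertex (r, 1) (r, 2 * j - 1) (H1 - {es 0}))"
    then obtain j where j: "j \<in> {2..2 * k - 1}" "x \<in> copy (2 * j - 1) ` B"
      unfolding replace B_def by blast
    then have "2 * j - 1 = 2 * (j - 1) + 1" "j - 1 \<in> {1..L}" by (auto simp: L_def)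
    then show "x \<in> (\<Union>p\<in>{1..L}. copy (2 * p + 1) ` B)" using j(2) by auto
  next
    fix x assume "x \<in> (\<Union>p\<in>{1..L}. copy (2 * p + 1) ` B)"
    then obtain p where p: "p \<in> {1..L}" "x \<in> copy (2 * p + 1) ` B" by blast
    then have "2 * (p + 1) - 1 = 2 * p + 1" "p + 1 \<in> {2..2 * k - 1}" by (auto simp: L_def)
    then show "x \<in> (\<Union>j\<in>{2..2 * k - 1}. replace_vertex (r, 1) (r, 2 * j - 1) (H1 - {es 0}))"
      using p(2) unfolding replace B_def by (metis UN_iff)
  qed
qed

lemma gadgets_eq_Gadgets:
  "(\<Union>j\<in>{1..k - 1}. gadget r (r, 4 * j - 3) (r, 4 * j - 2) (r, 4 * j - 1) (es T1 - {(r, 1)})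
    \<union> gadget r (r, 4 * j - 1) (r, 4 * j) (r, 4 * j + 1) (es 0 - {(r, 1)})) = Gadgets"
proof -
  have "gadget r (r, 4 * j - 3) (r, 4 * j - 2) (r, 4 * j - 1) (es T1 - {(r, 1)}) = gadget_at (2 * j - 2)"
    "gadget r (r, 4 * j - 1) (r, 4 * j) (r, 4 * j + 1) (es 0 - {(r, 1)}) = gadget_at (2 * j - 1)"
    if "1 \<le> j" for j
  proof -
    have "link (2 * j - 2) = es T1 - {(r, 1)}" "link (2 * j - 1) = es 0 - {(r, 1)}"
      using that by (simp_all add: link_def run_def)
    moreover have "2 * (2 * j - 2) + 1 = 4 * j - 3" "2 * (2 * j - 2) + 2 = 4 * j - 2"
      "2 * (2 * j - 2) + 3 = 4 * j - 1" "2 * (2 * j - 1) + 1 = 4 * j - 1"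
      "2 * (2 * j - 1) + 2 = 4 * j" "2 * (2 * j - 1) + 3 = 4 * j + 1"
      using that by auto
    ultimately show "gadget r (r, 4 * j - 3) (r, 4 * j - 2) (r, 4 * j - 1) (es T1 - {(r, 1)}) = gadget_at (2 * j - 2)"
      "gadget r (r, 4 * j - 1) (r, 4 * j) (r, 4 * j + 1) (es 0 - {(r, 1)}) = gadget_at (2 * j - 1)"
      unfolding gadget_at_def by (simp_all only:)
  qed
  then have "(\<Union>j\<in>{1..k - 1}. gadget r (r, 4 * j - 3) (r, 4 * j - 2) (r, 4 * j - 1) (es T1 - {(r, 1)})
      \<union> gadget r (r, 4 * j - 1) (r, 4 * j) (r, 4 * j + 1) (es 0 - {(r, 1)}))
    = (\<Union>j\<in>{1..k - 1}. gadget_at (2 * j - 2) \<union> gadget_at (2 * j - 1))"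
    by (intro SUP_cong) auto
  also have "\<dots> = Gadgets"
    unfolding UN_consecutive_pairs Gadgets_def L_def using k by (simp add: right_diff_distrib')
  finally show ?thesis .
qed

end

context seed_mirror
begin

lemma stage_sequential: "sequential k r (Astar k r) (stage 0 0) ext Tend"
proof -
  have "is_rgraph r (Astar k r) (stage 0 0)"
    unfolding is_rgraph_def using stage_edges by (simp add: V_def)
  moreover have "\<forall>i\<le>Tend. ext i \<subseteq> Astar k r \<and> card (ext i) = r"
    using ext_edges by (simp add: V_def)
  moreover have "ext 0 \<in> stage 0 0" using ext_init[of 0] es_0 stage_0_0 by simp
  moreover have "\<forall>i\<in>{1..Tend}. boot r (Astar k r) (stage 0 0) i - boot r (Astar k r) (stage 0 0) (i - 1) = {ext i}"
    using forward_steps by (simp add: V_def)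
  moreover have "\<forall>i\<in>{1..Tend}. boot r (Astar k r) (stage 0 0 \<union> {ext Tend} - {ext 0}) i
      - boot r (Astar k r) (stage 0 0 \<union> {ext Tend} - {ext 0}) (i - 1) = {ext (Tend - i)}"
    using backward_steps by (simp add: V_def)
  moreover have "boot r (Astar k r) (stage 0 0) (Suc Tend) = boot r (Astar k r) (stage 0 0) Tend"
    using forward_stops by (simp add: V_def)
  moreover have "stationary r (Astar k r) (stage 0 0 - {ext 0})"
    using stage_0_0_minus_first_stationary ext_init[of 0] by (simp add: V_def)
  ultimately show ?thesis unfolding sequential_def using r by blast
qed

end

lemma seed_mirror_of_sequential:
  assumes "3 \<le> r" "2 \<le> k" "1 \<le> T1"
    and seq: "sequential k r (Astar k (r - 1) \<union> {(r, 1)}) H1 es T1"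
    and top: "\<forall>i\<le>T1. (r, 1) \<in> es i"
  shows "seed_mirror r k T1 H1 es"
proof -
  let ?W = "Astar k (r - 1) \<union> {(r, 1)}"
  have H1: "is_rgraph r ?W H1" and es: "\<forall>i\<le>T1. es i \<subseteq> ?W \<and> card (es i) = r"
    and es_0: "es 0 \<in> H1" and base: "stationary r ?W (H1 - {es 0})"
    using seq unfolding sequential_def by simp_all
  show ?thesis
    unfolding seed_mirror_def
  proof (unfold_locales)
    show "3 \<le> r" "2 \<le> k" "1 \<le> T1" by fact+
    show "f \<subseteq> ?W \<and> card f = r" if "f \<in> H1" for f
      using H1 that unfolding is_rgraph_def by blast
    show "es i \<subseteq> ?W \<and> card (es i) = r \<and> (r, 1) \<in> es i" if "i \<le> T1" for i
      using es top that by blast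
    show "es 0 \<in> H1" "stationary r ?W (H1 - {es 0})" by fact+
    show "sequential_run r ?W (H1 - {es 0}) T1 es" "sequential_run r ?W (H1 - {es 0}) T1 (\<lambda>i. es (T1 - i))"
      using sequential_forward_run[OF seq] sequential_backward_run[OF seq \<open>1 \<le> T1\<close>] .
  qed
qed

theorem proposition2p2:
  fixes r k T1 :: nat and H1 :: "vert set set" and es :: "nat \<Rightarrow> vert set"
  assumes "3 \<le> r" and "2 \<le> k" and "2 \<le> T1"
    and "is_rgraph r (Astar k (r - 1) \<union> {vtx r 1}) H1"
    and "sequential k r (Astar k (r - 1) \<union> {vtx r 1}) H1 es T1"
    and "\<forall>i\<le>T1. vtx r 1 \<in> es i"
  shows "let em = (\<lambda>i. es i - {vtx r 1});
             Hodd = (\<lambda>j. replace_vertex (vtx r 1) (vtx r (2 * j - 1)) (H1 - {es 0}));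
             Hev1 = (\<lambda>j. gadget r (vtx r (4 * j - 3)) (vtx r (4 * j - 2)) (vtx r (4 * j - 1)) (em T1));
             Hev2 = (\<lambda>j. gadget r (vtx r (4 * j - 1)) (vtx r (4 * j)) (vtx r (4 * j + 1)) (em 0));
             H = H1 \<union> (\<Union>j\<in>{2..2 * k - 1}. Hodd j) \<union> (\<Union>j\<in>{1..k - 1}. Hev1 j \<union> Hev2 j);
             T = (2 * k - 1) * T1 + 4 * (k - 1)
         in \<exists>es'. (\<forall>i\<le>T1. es' i = es i) \<and> sequential k r (Astar k r) H es' T"
proof -
  have vtx: "vtx i j = (i, j)" for i j by (simp add: vtx_def)
  interpret seed_mirror r k T1 H1 es
    using seed_mirror_of_sequential assms unfolding vtx by simp
  have H: "H1 \<union> (\<Union>j\<in>{2..2 * k - 1}. replace_vertex (r, 1) (r, 2 * j - 1) (H1 - {es 0}))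
      \<union> (\<Union>j\<in>{1..k - 1}. gadget r (r, 4 * j - 3) (r, 4 * j - 2) (r, 4 * j - 1) (es T1 - {(r, 1)})
        \<union> gadget r (r, 4 * j - 1) (r, 4 * j) (r, 4 * j + 1) (es 0 - {(r, 1)})) = stage 0 0"
    unfolding stage_0_0 replace_vertex_eq_copies gadgets_eq_Gadgets by auto
  have T: "(2 * k - 1) * T1 + 4 * (k - 1) = Tend"
    unfolding Tend_def L_def period_def using \<open>2 \<le> k\<close> by (cases k) (auto simp: algebra_simps)
  show ?thesis
    unfolding Let_def vtx H T using stage_sequential ext_init by blast
qed

end
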